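(* Let $\rho$ be a state supported on $\Omega=\{|-\rangle,|+\rangle,\varphi_{0_1},\varphi_{0_N}\}^\perp$. Then $\rho$ is invariant if and only if, for every $k=1,\dots,N-1$, $\rho$ commutes with $|Z|_k$ and with $P_{k+1}$ and satisfies $$Z_k^*\rho Z_k=e^{\beta_k}\rho|Z|_k .$$ In this case $\rho$ commutes with the Hamiltonian $H_S=\varepsilon_-P_-+\varepsilon_+P_++\sum_{k=1}^N\varepsilon_kP_k$.
   Context: Fix integers $N\ge 2$ and $n_1\ge n_2\ge\dots\ge n_N\ge 1$. Let $\mathcal H$ be a finite-dimensional complex Hilbert space with orthonormal basis $\{|-\rangle,|+\rangle\}\cup\{|a_k\rangle:1\le k\le N,\ 0\le a\le n_k-1\}$. For vectors $x,y$, $|x\rangle\langle y|$ denotes the operator $u\mapsto\langle y,u\rangle x$. Put $E_k=\mathrm{span}\{|a_k\rangle:0\le a\le n_k-1\}$, $P_k$ the orthogonal projection onto $E_k$, $P_\pm=|\pm\rangle\langle\pm|$, $\zeta_k=e^{2\pi i/n_k}$, and $\varphi_{a_k}=n_k^{-1/2}\sum_{b=0}^{n_k-1}\zeta_k^{-ba}|b_k\rangle$ for $0\le a\le n_k-1$. For $1\le k\le N-1$ let $Z_k=n_k^{-1/2}\sum_{b=0}^{n_{k+1}-1}\sum_{a=0}^{n_k-1}\zeta_k^{ba}|b_{k+1}\rangle\langle a_k|$ (an operator on $\mathcal H$), $|Z|_k=Z_k^*Z_k$. The energies $\varepsilon_-,\varepsilon_+,\varepsilon_1,\dots,\varepsilon_N$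 are real, pairwise distinct, with $\varepsilon_-<\varepsilon_{k+1}<\varepsilon_k<\varepsilon_+$; the Bohr frequencies $\omega_+=\varepsilon_+-\varepsilon_1$, $\omega_k=\varepsilon_k-\varepsilon_{k+1}$ ($1\le k\le N-1$), $\omega_-=\varepsilon_N-\varepsilon_-$ are assumed pairwise distinct. Let $\omega$ range over $\{\omega_+,\omega_-,\omega_1,\dots,\omega_{N-1}\}$, and let $\Gamma_{\pm,\omega}>0$, $\gamma_{\pm,\omega}\in\mathbb R$ be constants. Kraus operators: $L_{-,\omega_+}=\sqrt{n_1\Gamma_{-,\omega_+}}|\varphi_{0_1}\rangle\langle +|$, $L_{+,\omega_+}=\sqrt{n_1\Gamma_{+,\omega_+}}|+\rangle\langle\varphi_{0_1}|$, $L_{-,\omega_k}=\sqrt{\Gamma_{-,\omega_k}}Z_k$, $L_{+,\omega_k}=\sqrt{\Gamma_{+,\omega_k}}Z_k^*$ ($1\le k\le N-1$), $L_{-,\omega_-}=\sqrt{\Gamma_{-,\omega_-}}|-\rangle\langle\varphi_{0_N}|$, $L_{+,\omega_-}=0$. Effective Hamiltonian $H_{\mathrm{eff}}=n_1\gamma_{-,\omega_+}P_+-n_1\gamma_{+,\omega_+}|\varphi_{0_1}\rangle\langle\varphi_{0_1}|+\gamma_{-,\omega_-}|\varphi_{0_N}\rangle\langle\varphi_{0_N}|-\gamma_{+,\omega_-}P_-+\sum_{k=1}^{N-1}(\gamma_{-,\omega_k}|Z|_k-\gamma_{+,\omega_k}P_{k+1})$. The generator is $\mathcal L(\rho)=-i[H_{\mathrm{eff}},\rho]+\sum_{\omega}\sum_{\epsilon=\pm}\big(L_{\epsilon,\omega}\rho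 L_{\epsilon,\omega}^*-\tfrac12\{L_{\epsilon,\omega}^*L_{\epsilon,\omega},\rho\}\big)$. A state is a positive operator of trace one; it is invariant if $\mathcal L(\rho)=0$; an operator is supported on a subspace $E$ if its range is contained in $E$. Define $\beta_k$ by $e^{\beta_k}=\Gamma_{-,\omega_k}/\Gamma_{+,\omega_k}$ for $1\le k\le N-1$. *)

theory Defs
  imports Complex_Main
begin

(* Orthonormal basis of H: |->  = Mi, |+> = Pl, |a_k> = Bs k a  (1 <= k <= N, a < n k).
   Vectors are coefficient functions, operators are matrices of entries <i|A|j>. *)
datatype idx = Mi | Pl | Bs nat nat

type_synonym vec = "idx \<Rightarrow> complex"
type_synonym op = "idx \<Rightarrow> idx \<Rightarrow> complex"

definition basis :: "nat \<Rightarrow> (nat \<Rightarrow> nat) \<Rightarrow> idx set" where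
  "basis N n = {Mi, Pl} \<union> {Bs k a | k a. 1 \<le> k \<and> k \<le> N \<and> a < n k}"

definition is_vec :: "nat \<Rightarrow> (nat \<Rightarrow> nat) \<Rightarrow> vec \<Rightarrow> bool" where
  "is_vec N n v \<longleftrightarrow> (\<forall>i. i \<notin> basis N n \<longrightarrow> v i = 0)"

definition is_op :: "nat \<Rightarrow> (nat \<Rightarrow> nat) \<Rightarrow> op \<Rightarrow> bool" where
  "is_op N n A \<longleftrightarrow> (\<forall>i j. i \<notin> basis N n \<or> j \<notin> basis N n \<longrightarrow> A i j = 0)"

definition inner :: "nat \<Rightarrow> (nat \<Rightarrow> nat) \<Rightarrow> vec \<Rightarrow> vec \<Rightarrow> complex" where
  "inner N n v w = (\<Sum>i\<in>basis N n. cnj (v i) * w i)"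

definition app :: "nat \<Rightarrow> (nat \<Rightarrow> nat) \<Rightarrow> op \<Rightarrow> vec \<Rightarrow> vec" where
  "app N n A v = (\<lambda>i. \<Sum>j\<in>basis N n. A i j * v j)"

definition mmul :: "nat \<Rightarrow> (nat \<Rightarrow> nat) \<Rightarrow> op \<Rightarrow> op \<Rightarrow> op" where
  "mmul N n A C = (\<lambda>i j. \<Sum>l\<in>basis N n. A i l * C l j)"

definition adj :: "op \<Rightarrow> op" where
  "adj A = (\<lambda>i j. cnj (A j i))"

definition trace :: "nat \<Rightarrow> (nat \<Rightarrow> nat) \<Rightarrow> op \<Rightarrow> complex" where
  "trace N n A = (\<Sum>i\<in>basis N n. A i i)"

definition outer :: "vec \<Rightarrow> vec \<Rightarrow> op" where
  "outer v w = (\<lambda>i j. v i * cnj (w j))"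

definition ket :: "idx \<Rightarrow> vec" where
  "ket i = (\<lambda>j. if j = i then 1 else 0)"

definition proj :: "(nat \<Rightarrow> nat) \<Rightarrow> nat \<Rightarrow> op" where
  "proj n k = (\<lambda>i j. if i = j \<and> (\<exists>a. i = Bs k a \<and> a < n k) then 1 else 0)"

definition zeta :: "(nat \<Rightarrow> nat) \<Rightarrow> nat \<Rightarrow> complex" where
  "zeta n k = exp (2 * complex_of_real pi * \<i> / of_nat (n k))"

definition phi :: "(nat \<Rightarrow> nat) \<Rightarrow> nat \<Rightarrow> nat \<Rightarrow> vec" where
  "phi n k a = (\<lambda>i. case i of
      Bs k' b \<Rightarrow> if k' = k \<and> b < n k
                  then inverse (zeta n k ^ (b * a)) / complex_of_real (sqrt (real (n k))) else 0
    | _ \<Rightarrow> 0)"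

definition Zop :: "(nat \<Rightarrow> nat) \<Rightarrow> nat \<Rightarrow> op" where
  "Zop n k = (\<lambda>i j. case (i, j) of
      (Bs k1 b, Bs k2 a) \<Rightarrow>
         if k1 = Suc k \<and> k2 = k \<and> b < n (Suc k) \<and> a < n k
         then zeta n k ^ (b * a) / complex_of_real (sqrt (real (n k))) else 0
    | _ \<Rightarrow> 0)"

definition absZ :: "nat \<Rightarrow> (nat \<Rightarrow> nat) \<Rightarrow> nat \<Rightarrow> op" where
  "absZ N n k = mmul N n (adj (Zop n k)) (Zop n k)"

definition omega_p :: "real \<Rightarrow> (nat \<Rightarrow> real) \<Rightarrow> real" where
  "omega_p ep e = ep - e 1"
definition omega_m :: "nat \<Rightarrow> real \<Rightarrow> (nat \<Rightarrow> real) \<Rightarrow> real" where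
  "omega_m N em e = e N - em"
definition omega :: "(nat \<Rightarrow> real) \<Rightarrow> nat \<Rightarrow> real" where
  "omega e k = e k - e (Suc k)"

(* Effective Hamiltonian; gp = gamma_{+,.}, gm = gamma_{-,.} *)
definition Heff :: "nat \<Rightarrow> (nat \<Rightarrow> nat) \<Rightarrow> real \<Rightarrow> real \<Rightarrow> (nat \<Rightarrow> real)
    \<Rightarrow> (real \<Rightarrow> real) \<Rightarrow> (real \<Rightarrow> real) \<Rightarrow> op" where
  "Heff N n em ep e gp gm = (\<lambda>i j.
       of_nat (n 1) * of_real (gm (omega_p ep e)) * outer (ket Pl) (ket Pl) i j
     - of_nat (n 1) * of_real (gp (omega_p ep e)) * outer (phi n 1 0) (phi n 1 0) i j
     + of_real (gm (omega_m N em e)) * outer (phi n N 0) (phi n N 0) i j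
     - of_real (gp (omega_m N em e)) * outer (ket Mi) (ket Mi) i j
     + (\<Sum>k\<in>{1..N-1}. of_real (gm (omega e k)) * absZ N n k i j
                      - of_real (gp (omega e k)) * proj n (Suc k) i j))"

definition dissip :: "nat \<Rightarrow> (nat \<Rightarrow> nat) \<Rightarrow> op \<Rightarrow> op \<Rightarrow> op" where
  "dissip N n L \<rho> = (\<lambda>i j.
       mmul N n (mmul N n L \<rho>) (adj L) i j
     - (mmul N n (mmul N n (adj L) L) \<rho> i j + mmul N n \<rho> (mmul N n (adj L) L) i j) / 2)"

definition scal :: "complex \<Rightarrow> op \<Rightarrow> op" where
  "scal c A = (\<lambda>i j. c * A i j)"

(* Kraus operators; Gp = Gamma_{+,.}, Gm = Gamma_{-,.} *)
definition L_m_wp :: "(nat \<Rightarrow> nat) \<Rightarrow> real \<Rightarrow> (nat \<Rightarrow> real) \<Rightarrow> (real \<Rightarrow> real) \<Rightarrow> op" where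
  "L_m_wp n ep e Gm = scal (of_real (sqrt (real (n 1) * Gm (omega_p ep e)))) (outer (phi n 1 0) (ket Pl))"
definition L_p_wp :: "(nat \<Rightarrow> nat) \<Rightarrow> real \<Rightarrow> (nat \<Rightarrow> real) \<Rightarrow> (real \<Rightarrow> real) \<Rightarrow> op" where
  "L_p_wp n ep e Gp = scal (of_real (sqrt (real (n 1) * Gp (omega_p ep e)))) (outer (ket Pl) (phi n 1 0))"
definition L_m_wk :: "(nat \<Rightarrow> nat) \<Rightarrow> (nat \<Rightarrow> real) \<Rightarrow> (real \<Rightarrow> real) \<Rightarrow> nat \<Rightarrow> op" where
  "L_m_wk n e Gm k = scal (of_real (sqrt (Gm (omega e k)))) (Zop n k)"
definition L_p_wk :: "(nat \<Rightarrow> nat) \<Rightarrow> (nat \<Rightarrow> real) \<Rightarrow> (real \<Rightarrow> real) \<Rightarrow> nat \<Rightarrow> op" where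
  "L_p_wk n e Gp k = scal (of_real (sqrt (Gp (omega e k)))) (adj (Zop n k))"
definition L_m_wm :: "nat \<Rightarrow> (nat \<Rightarrow> nat) \<Rightarrow> real \<Rightarrow> (nat \<Rightarrow> real) \<Rightarrow> (real \<Rightarrow> real) \<Rightarrow> op" where
  "L_m_wm N n em e Gm = scal (of_real (sqrt (Gm (omega_m N em e)))) (outer (ket Mi) (phi n N 0))"
definition L_p_wm :: "op" where
  "L_p_wm = (\<lambda>i j. 0)"

definition gen :: "nat \<Rightarrow> (nat \<Rightarrow> nat) \<Rightarrow> real \<Rightarrow> real \<Rightarrow> (nat \<Rightarrow> real)
    \<Rightarrow> (real \<Rightarrow> real) \<Rightarrow> (real \<Rightarrow> real) \<Rightarrow> (real \<Rightarrow> real) \<Rightarrow> (real \<Rightarrow> real) \<Rightarrow> op \<Rightarrow> op" where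
  "gen N n em ep e Gp Gm gp gm \<rho> = (\<lambda>i j.
       - \<i> * (mmul N n (Heff N n em ep e gp gm) \<rho> i j - mmul N n \<rho> (Heff N n em ep e gp gm) i j)
     + dissip N n (L_m_wp n ep e Gm) \<rho> i j + dissip N n (L_p_wp n ep e Gp) \<rho> i j
     + dissip N n (L_m_wm N n em e Gm) \<rho> i j + dissip N n L_p_wm \<rho> i j
     + (\<Sum>k\<in>{1..N-1}. dissip N n (L_m_wk n e Gm k) \<rho> i j + dissip N n (L_p_wk n e Gp k) \<rho> i j))"

definition is_state :: "nat \<Rightarrow> (nat \<Rightarrow> nat) \<Rightarrow> op \<Rightarrow> bool" where
  "is_state N n \<rho> \<longleftrightarrow> is_op N n \<rho>
     \<and> (\<forall>v. is_vec N n v \<longrightarrow> Im (inner N n v (app N n \<rho> v)) = 0 \<and> 0 \<le> Re (inner N n v (app N n \<rho> v)))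
     \<and> trace N n \<rho> = 1"

definition invariant :: "nat \<Rightarrow> (nat \<Rightarrow> nat) \<Rightarrow> real \<Rightarrow> real \<Rightarrow> (nat \<Rightarrow> real)
    \<Rightarrow> (real \<Rightarrow> real) \<Rightarrow> (real \<Rightarrow> real) \<Rightarrow> (real \<Rightarrow> real) \<Rightarrow> (real \<Rightarrow> real) \<Rightarrow> op \<Rightarrow> bool" where
  "invariant N n em ep e Gp Gm gp gm \<rho> \<longleftrightarrow> gen N n em ep e Gp Gm gp gm \<rho> = (\<lambda>i j. 0)"

(* range of rho contained in Omega = {|->, |+>, phi_{0_1}, phi_{0_N}}^perp *)
definition supported_Omega :: "nat \<Rightarrow> (nat \<Rightarrow> nat) \<Rightarrow> op \<Rightarrow> bool" where
  "supported_Omega N n \<rho> \<longleftrightarrow> (\<forall>v. is_vec N n v \<longrightarrow>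
     (\<forall>u\<in>{ket Mi, ket Pl, phi n 1 0, phi n N 0}. inner N n u (app N n \<rho> v) = 0))"

definition commutes :: "nat \<Rightarrow> (nat \<Rightarrow> nat) \<Rightarrow> op \<Rightarrow> op \<Rightarrow> bool" where
  "commutes N n A B \<longleftrightarrow> mmul N n A B = mmul N n B A"

definition HS :: "nat \<Rightarrow> (nat \<Rightarrow> nat) \<Rightarrow> real \<Rightarrow> real \<Rightarrow> (nat \<Rightarrow> real) \<Rightarrow> op" where
  "HS N n em ep e = (\<lambda>i j. of_real em * outer (ket Mi) (ket Mi) i j + of_real ep * outer (ket Pl) (ket Pl) i j
      + (\<Sum>k\<in>{1..N}. of_real (e k) * proj n k i j))"

(* e^{beta_k} = Gamma_{-,omega_k} / Gamma_{+,omega_k} *)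
definition beta :: "(nat \<Rightarrow> real) \<Rightarrow> (real \<Rightarrow> real) \<Rightarrow> (real \<Rightarrow> real) \<Rightarrow> nat \<Rightarrow> real" where
  "beta e Gp Gm k = ln (Gm (omega e k) / Gp (omega e k))"

end

theory Submission
  imports Defs "HOL-Library.Function_Algebras"
begin

(* On a state supported in Omega every term of the generator involving |->, |+>, phi_{0_1} or
   phi_{0_N} annihilates rho from both sides, so L(rho) = -i[H, rho] - {D, rho}/2 + Phi(rho), where
   H and D are real combinations of the projections |Z|_k and P_{k+1}, and
   Phi(rho) = sum_k Gamma_- Z_k rho Z_k^* + Gamma_+ Z_k^* rho Z_k; here Z_k Z_k^* = P_{k+1} is the
   orthogonality of the characters of Z/n_k.
   On the level E_j the operators H and D act as scalars h, d on the two blocks |Z|_j and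
   P_j - |Z|_j, while P_j Phi(rho) P_l vanishes for j <> l and only involves Z_j^* rho Z_j and
   Z_{j-1} rho Z_{j-1}^* for j = l. Sandwiching L(rho) = 0 between two blocks S, T therefore gives
   S Phi(rho) T = (i (h_S - h_T) + (d_S + d_T)/2) S rho T. As d_S + d_T > 0 whenever S and T lie
   on different levels, rho is block diagonal; an induction down the ladder then yields
   Gamma_- |Z|_k rho |Z|_k = Gamma_+ Z_k^* rho Z_k and |Z|_k rho (P_k - |Z|_k) = 0, i.e. the
   stated relations. Conversely, these relations turn Phi(rho) into D rho, which cancels the
   anticommutator, while the commutator vanishes. Block diagonality and P_{+-} rho = 0 also make
   rho commute with H_S. *)

section \<open>Matrix calculus on the basis\<close>

lemma finite_basis [simp]: "finite (basis N n)"
proof -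
  have "basis N n = {Mi, Pl} \<union> (\<Union>k\<in>{1..N}. Bs k ` {..<n k})"
    by (auto simp: basis_def)
  then show ?thesis by simp
qed

lemma sum_op_apply: "sum F K i j = (\<Sum>k\<in>K. (F k :: op) i j)"
  by (induction K rule: infinite_finite_induct) auto

lemma mmul_assoc: "mmul N n (mmul N n A B) C = mmul N n A (mmul N n B C)"
  unfolding mmul_def
  by (intro ext) (simp add: sum_distrib_left sum_distrib_right mult.assoc, rule sum.swap)

lemma mmul_add_left: "mmul N n (A + B) C = mmul N n A C + mmul N n B C"
  unfolding mmul_def by (intro ext) (simp add: distrib_right sum.distrib)

lemma mmul_add_right: "mmul N n A (B + C) = mmul N n A B + mmul N n A C"
  unfolding mmul_def by (intro ext) (simp add: distrib_left sum.distrib)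

lemma mmul_diff_left: "mmul N n (A - B) C = mmul N n A C - mmul N n B C"
  unfolding mmul_def by (intro ext) (simp add: left_diff_distrib sum_subtractf)

lemma mmul_diff_right: "mmul N n A (B - C) = mmul N n A B - mmul N n A C"
  unfolding mmul_def by (intro ext) (simp add: right_diff_distrib sum_subtractf)

lemma mmul_zero_left [simp]: "mmul N n 0 A = 0"
  unfolding mmul_def by (intro ext) simp

lemma mmul_zero_right [simp]: "mmul N n A 0 = 0"
  unfolding mmul_def by (intro ext) simp

lemma mmul_scal_left: "mmul N n (scal c A) B = scal c (mmul N n A B)"
  unfolding mmul_def scal_def by (intro ext) (simp add: sum_distrib_left mult.assoc)

lemma mmul_scal_right: "mmul N n A (scal c B) = scal c (mmul N n A B)"
  unfolding mmul_def scal_def by (intro ext) (simp add: sum_distrib_left mult.left_commute)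

lemma mmul_sum_left: "mmul N n (sum F K) A = (\<Sum>k\<in>K. mmul N n (F k) A)"
  unfolding mmul_def by (intro ext) (simp add: sum_op_apply sum_distrib_right sum.swap[of _ K])

lemma mmul_sum_right: "mmul N n A (sum F K) = (\<Sum>k\<in>K. mmul N n A (F k))"
  unfolding mmul_def by (intro ext) (simp add: sum_op_apply sum_distrib_left sum.swap[of _ K])

lemmas mmul_linear = mmul_add_left mmul_add_right mmul_diff_left mmul_diff_right
  mmul_scal_left mmul_scal_right mmul_sum_left mmul_sum_right

lemma scal_add_right: "scal c (A + B) = scal c A + scal c B"
  unfolding scal_def by (intro ext) (simp add: distrib_left)

lemma scal_diff_right: "scal c (A - B) = scal c A - scal c B"
  unfolding scal_def by (intro ext) (simp add: right_diff_distrib)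

lemma scal_add_left: "scal (c + d) A = scal c A + scal d A"
  unfolding scal_def by (intro ext) (simp add: distrib_right)

lemma scal_zero_left [simp]: "scal 0 A = 0"
  unfolding scal_def by (intro ext) simp

lemma scal_zero_right [simp]: "scal c 0 = 0"
  unfolding scal_def by (intro ext) simp

lemma scal_one [simp]: "scal 1 A = A"
  unfolding scal_def by (intro ext) simp

lemma scal_scal [simp]: "scal c (scal d A) = scal (c * d) A"
  unfolding scal_def by (intro ext) simp

lemma scal_sum_right: "scal c (sum F K) = (\<Sum>k\<in>K. scal c (F k))"
  unfolding scal_def by (intro ext) (simp add: sum_op_apply sum_distrib_left)

lemma scal_eq_0_iff: "scal c A = 0 \<longleftrightarrow> c = 0 \<or> A = 0"
  unfolding scal_def by (auto simp: fun_eq_iff)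

lemma adj_adj [simp]: "adj (adj A) = A"
  unfolding adj_def by simp

lemma adj_zero [simp]: "adj 0 = 0"
  unfolding adj_def by (simp add: zero_fun_def)

lemma adj_mmul: "adj (mmul N n A B) = mmul N n (adj B) (adj A)"
  unfolding mmul_def adj_def by (intro ext) (simp add: mult.commute)

lemma adj_scal: "adj (scal c A) = scal (cnj c) (adj A)"
  unfolding adj_def scal_def by simp

lemma adj_outer: "adj (outer x y) = outer y x"
  unfolding adj_def outer_def by (simp add: mult.commute)

lemma adj_proj [simp]: "adj (proj n j) = proj n j"
  unfolding adj_def proj_def by (intro ext) auto

definition ident :: "nat \<Rightarrow> (nat \<Rightarrow> nat) \<Rightarrow> op" where
  "ident N n = (\<lambda>i j. if i = j \<and> i \<in> basis N n then 1 else 0)"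

lemma ident_eq_sum_proj:
  "ident N n = outer (ket Mi) (ket Mi) + outer (ket Pl) (ket Pl) + (\<Sum>l\<in>{1..N}. proj n l)"
proof (intro ext)
  fix i j
  show "ident N n i j = (outer (ket Mi) (ket Mi) + outer (ket Pl) (ket Pl) + (\<Sum>l\<in>{1..N}. proj n l)) i j"
  proof (cases i)
    case (Bs k a)
    have "(\<Sum>l\<in>{1..N}. proj n l i j) = (\<Sum>l\<in>{1..N}. if l = k then (if i = j \<and> a < n k then 1 else 0) else 0)"
      by (intro sum.cong) (auto simp: proj_def Bs)
    then show ?thesis
      by (auto simp: ident_def outer_def ket_def sum_op_apply basis_def Bs)
  qed (auto simp: ident_def outer_def ket_def sum_op_apply proj_def basis_def)
qed

lemma mmul_ident_right:
  assumes "is_op N n A"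
  shows "mmul N n A (ident N n) = A"
proof (intro ext)
  fix i j
  have "mmul N n A (ident N n) i j = (\<Sum>l\<in>basis N n. if l = j then (if j \<in> basis N n then A i j else 0) else 0)"
    unfolding mmul_def ident_def by (intro sum.cong) auto
  also have "\<dots> = A i j"
    using assms by (simp add: is_op_def)
  finally show "mmul N n A (ident N n) i j = A i j" .
qed

lemma mmul_ident_left:
  assumes "is_op N n A"
  shows "mmul N n (ident N n) A = A"
proof (intro ext)
  fix i j
  have "mmul N n (ident N n) A i j = (\<Sum>l\<in>basis N n. if l = i then (if i \<in> basis N n then A i j else 0) else 0)"
    unfolding mmul_def ident_def by (intro sum.cong) auto
  also have "\<dots> = A i j"
    using assms by (simp add: is_op_def)
  finally show "mmul N n (ident N n) A i j = A i j" .
qed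

lemma dissip_eq:
  "dissip N n L \<rho> = mmul N n (mmul N n L \<rho>) (adj L)
     - scal (1/2) (mmul N n (mmul N n (adj L) L) \<rho> + mmul N n \<rho> (mmul N n (adj L) L))"
  unfolding dissip_def scal_def by (intro ext) (simp add: field_simps)

lemma dissip_eq_0: "mmul N n L \<rho> = 0 \<Longrightarrow> mmul N n \<rho> (adj L) = 0 \<Longrightarrow> dissip N n L \<rho> = 0"
  unfolding dissip_eq by (simp add: mmul_assoc flip: mmul_assoc[of N n \<rho>])

lemma dissip_scal_sqrt:
  assumes "0 \<le> G"
  shows "dissip N n (scal (of_real (sqrt G)) L) \<rho> = scal (of_real G) (dissip N n L \<rho>)"
proof -
  have "complex_of_real (sqrt G) * complex_of_real (sqrt G) = complex_of_real G"
    using assms by (simp flip: of_real_mult)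
  then show ?thesis
    unfolding dissip_eq by (simp add: adj_scal mmul_scal_left mmul_scal_right scal_diff_right scal_add_right)
qed

section \<open>Hermitian states supported in \<open>\<Omega>\<close>\<close>

lemma sum_basis_mult_ket:
  assumes "i \<in> basis N n"
  shows "(\<Sum>l\<in>basis N n. f l * ket i l) = f i"
proof -
  have "(\<Sum>l\<in>basis N n. f l * ket i l) = (\<Sum>l\<in>basis N n. if l = i then f i else 0)"
    by (rule sum.cong) (auto simp: ket_def)
  then show ?thesis
    using assms by simp
qed

lemma cnj_ket [simp]: "cnj (ket i l) = ket i l"
  by (simp add: ket_def)

lemma app_ket: "m \<in> basis N n \<Longrightarrow> app N n A (ket m) = (\<lambda>i. A i m)"
  unfolding app_def by (simp add: sum_basis_mult_ket)

lemma inner_ket: "i \<in> basis N n \<Longrightarrow> inner N n (ket i) v = v i"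
  unfolding inner_def by (simp add: sum_basis_mult_ket mult.commute)

lemma ket_is_vec: "i \<in> basis N n \<Longrightarrow> is_vec N n (ket i)"
  unfolding is_vec_def ket_def by auto

lemma inner_app_two_point:
  assumes "i \<in> basis N n" "j \<in> basis N n" "i \<noteq> j"
  shows "inner N n (\<lambda>x. ket i x + c * ket j x) (app N n A (\<lambda>x. ket i x + c * ket j x))
       = A i i + c * A i j + cnj c * (A j i + c * A j j)"
proof -
  have "app N n A (\<lambda>x. ket i x + c * ket j x) = (\<lambda>x. A x i + c * A x j)"
    using assms unfolding app_def
    by (simp add: distrib_left sum.distrib mult.left_commute sum_basis_mult_ket flip: sum_distrib_left)
  then have "inner N n (\<lambda>x. ket i x + c * ket j x) (app N n A (\<lambda>x. ket i x + c * ket j x))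
      = (\<Sum>l\<in>basis N n. (A l i + c * A l j) * ket i l)
        + cnj c * (\<Sum>l\<in>basis N n. (A l i + c * A l j) * ket j l)"
    unfolding inner_def by (simp add: algebra_simps sum.distrib sum_distrib_left)
  also have "\<dots> = A i i + c * A i j + cnj c * (A j i + c * A j j)"
    using assms by (simp only: sum_basis_mult_ket)
  finally show ?thesis .
qed

lemma is_state_adj:
  assumes "is_state N n \<rho>"
  shows "adj \<rho> = \<rho>"
proof (intro ext)
  fix i j
  have op: "is_op N n \<rho>"
    and real: "\<And>v. is_vec N n v \<Longrightarrow> Im (inner N n v (app N n \<rho> v)) = 0"
    using assms unfolding is_state_def by auto
  have diag: "Im (\<rho> l l) = 0" if "l \<in> basis N n" for l
    using real[OF ket_is_vec[OF that]] that by (simp add: app_ket inner_ket)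
  have "\<rho> i j = cnj (\<rho> j i)"
  proof (cases "i \<in> basis N n \<and> j \<in> basis N n \<and> i \<noteq> j")
    case True
    then have ij: "j \<in> basis N n" "i \<in> basis N n" "j \<noteq> i"
      by auto
    have vec: "is_vec N n (\<lambda>x. ket j x + c * ket i x)" for c
      using True unfolding is_vec_def ket_def by auto
    have "Im (\<rho> j i) + Im (\<rho> i j) = 0"
      using real[OF vec[of 1]] inner_app_two_point[OF ij, of 1 \<rho>] diag ij by simp
    moreover have "Re (\<rho> j i) - Re (\<rho> i j) = 0"
      using real[OF vec[of \<i>]] inner_app_two_point[OF ij, of \<i> \<rho>] diag ij by simp
    ultimately show ?thesis
      by (simp add: complex_eq_iff)
  next
    case False
    then show ?thesis
      using op diag by (cases "j \<in> basis N n") (auto simp: is_op_def complex_eq_iff)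
  qed
  then show "adj \<rho> i j = \<rho> i j"
    unfolding adj_def by simp
qed

lemma supported_Omega_outer_mult:
  assumes "supported_Omega N n \<rho>" "is_op N n \<rho>" "u \<in> {ket Mi, ket Pl, phi n 1 0, phi n N 0}"
  shows "mmul N n (outer x u) \<rho> = 0"
proof (intro ext)
  fix i m
  have "inner N n u (\<lambda>l. \<rho> l m) = 0"
  proof (cases "m \<in> basis N n")
    case True
    then show ?thesis
      using assms(1,3) ket_is_vec[OF True] app_ket[OF True] unfolding supported_Omega_def by metis
  next
    case False
    then show ?thesis
      using assms(2) by (simp add: inner_def is_op_def)
  qed
  then show "mmul N n (outer x u) \<rho> i m = 0 i m"
    unfolding mmul_def outer_def inner_def by (simp add: mult.assoc flip: sum_distrib_left)
qed

lemma supported_Omega_mult_outer: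
  assumes "supported_Omega N n \<rho>" "is_op N n \<rho>" "adj \<rho> = \<rho>"
    and "u \<in> {ket Mi, ket Pl, phi n 1 0, phi n N 0}"
  shows "mmul N n \<rho> (outer u x) = 0"
  using arg_cong[OF supported_Omega_outer_mult[OF assms(1,2,4), of x], of adj]
  by (simp add: adj_mmul adj_outer assms(3))

section \<open>Orthogonality of the Fourier basis\<close>

lemma sum_powers_root_unity:
  fixes d m :: nat
  assumes "0 < d" "d < m"
  shows "(\<Sum>a<m. cis (2 * pi * d / m) ^ a) = 0"
proof -
  define w where "w = cis (2 * pi * d / m)"
  have inj: "inj_on (\<lambda>k. cis (2 * pi * real k / real m)) {..<m}"
    using bij_betw_roots_unity[of m] assms by (simp add: bij_betw_def)
  have "w \<noteq> 1"
    using inj_on_eq_iff[OF inj, of d 0] assms unfolding w_def by simp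
  have "w ^ m = cis (2 * pi * real d)"
    using assms by (simp add: w_def DeMoivre)
  also have "\<dots> = 1"
    by (rule cis_multiple_2pi) simp
  finally have "w ^ m = 1" .
  then have "(\<Sum>a<m. w ^ a) = 0"
    using \<open>w \<noteq> 1\<close> by (simp add: geometric_sum)
  then show ?thesis by (simp only: w_def)
qed

lemma root_unity_orthogonality:
  fixes m b b' :: nat
  assumes "b < m" "b' < m"
  defines "\<zeta> \<equiv> cis (2 * pi / m)"
  shows "(\<Sum>a<m. \<zeta> ^ (b * a) * cnj (\<zeta> ^ (b' * a))) = (if b = b' then of_nat m else 0)"
proof -
  define S where "S b b' = (\<Sum>a<m. \<zeta> ^ (b * a) * cnj (\<zeta> ^ (b' * a)))" for b b'
  have S_diff: "S b b' = (\<Sum>a<m. cis (2 * pi * real (b - b') / m) ^ a)" if "b' \<le> b" for b b'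
    unfolding S_def
  proof (intro sum.cong refl)
    fix a
    have "\<zeta> ^ (b * a) * cnj (\<zeta> ^ (b' * a)) = cis (real (b * a) * (2 * pi / m) - real (b' * a) * (2 * pi / m))"
      by (simp add: \<zeta>_def DeMoivre cis_cnj cis_mult)
    also have "real (b * a) * (2 * pi / m) - real (b' * a) * (2 * pi / m) = real a * (2 * pi * real (b - b') / m)"
      using that by (simp add: of_nat_diff algebra_simps flip: add_divide_distrib diff_divide_distrib)
    finally show "\<zeta> ^ (b * a) * cnj (\<zeta> ^ (b' * a)) = cis (2 * pi * real (b - b') / m) ^ a"
      by (simp only: DeMoivre)
  qed
  have main: "S b b' = (if b = b' then of_nat m else 0)" if "b' \<le> b" "b < m" for b b'
    using S_diff[OF that(1)] sum_powers_root_unity[of "b - b'" m] that by auto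
  have swap: "S b b' = cnj (S b' b)" for b b'
    unfolding S_def by (simp add: mult.commute)
  have "S b b' = (if b = b' then of_nat m else 0)"
  proof (cases "b' \<le> b")
    case True
    then show ?thesis using main assms(1) by blast
  next
    case False
    then have "b \<le> b'" "b' \<noteq> b" by auto
    then have "S b' b = 0" using main[OF \<open>b \<le> b'\<close> assms(2)] by simp
    then show ?thesis using swap[of b b'] \<open>b' \<noteq> b\<close> by simp
  qed
  then show ?thesis by (simp only: S_def)
qed

lemma zeta_eq_cis: "zeta n k = cis (2 * pi / n k)"
  by (simp add: zeta_def cis_conv_exp mult_ac)

section \<open>The ladder operators\<close>

lemma Zop_nonzeroD:
  "Zop n k i m \<noteq> 0 \<Longrightarrow> \<exists>b a. i = Bs (Suc k) b \<and> m = Bs k a \<and> b < n (Suc k) \<and> a < n k"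
  by (cases i; cases m) (auto simp: Zop_def split: if_splits)

lemma Zop_Bs [simp]:
  "Zop n k (Bs (Suc k) b) (Bs k a) =
     (if b < n (Suc k) \<and> a < n k then zeta n k ^ (b * a) / of_real (sqrt (n k)) else 0)"
  by (simp add: Zop_def)

lemma level_subset_basis: "1 \<le> j \<Longrightarrow> j \<le> N \<Longrightarrow> Bs j ` {..<n j} \<subseteq> basis N n"
  by (auto simp: basis_def)

lemma sum_basis_level:
  assumes "1 \<le> k" "k \<le> N" "\<And>l. l \<in> basis N n \<Longrightarrow> l \<notin> Bs k ` {..<n k} \<Longrightarrow> f l = 0"
  shows "sum f (basis N n) = (\<Sum>a<n k. f (Bs k a))"
proof -
  have "sum f (basis N n) = sum f (Bs k ` {..<n k})"
    using level_subset_basis[OF assms(1,2)] assms(3) by (intro sum.mono_neutral_right) auto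
  also have "\<dots> = (\<Sum>a<n k. f (Bs k a))"
    by (simp add: sum.reindex inj_on_def)
  finally show ?thesis .
qed

lemma proj_mult:
  assumes "1 \<le> j" "j \<le> N"
  shows "mmul N n (proj n j) A = (\<lambda>i m. if i \<in> Bs j ` {..<n j} then A i m else 0)"
proof (intro ext)
  fix i m
  have "mmul N n (proj n j) A i m
      = (\<Sum>l\<in>basis N n. if l = i then (if i \<in> Bs j ` {..<n j} then A i m else 0) else 0)"
    unfolding mmul_def by (intro sum.cong) (auto simp: proj_def)
  also have "\<dots> = (if i \<in> Bs j ` {..<n j} then A i m else 0)"
    using level_subset_basis[OF assms] by auto
  finally show "mmul N n (proj n j) A i m = (if i \<in> Bs j ` {..<n j} then A i m else 0)" .
qed

lemma mult_proj:
  assumes "1 \<le> j" "j \<le> N"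
  shows "mmul N n A (proj n j) = (\<lambda>i m. if m \<in> Bs j ` {..<n j} then A i m else 0)"
proof (intro ext)
  fix i m
  have "mmul N n A (proj n j) i m
      = (\<Sum>l\<in>basis N n. if l = m then (if m \<in> Bs j ` {..<n j} then A i m else 0) else 0)"
    unfolding mmul_def by (intro sum.cong) (auto simp: proj_def)
  also have "\<dots> = (if m \<in> Bs j ` {..<n j} then A i m else 0)"
    using level_subset_basis[OF assms] by auto
  finally show "mmul N n A (proj n j) i m = (if m \<in> Bs j ` {..<n j} then A i m else 0)" .
qed

lemma proj_mult_proj:
  "1 \<le> j \<Longrightarrow> j \<le> N \<Longrightarrow> mmul N n (proj n j) (proj n l) = (if j = l then proj n j else 0)"
  by (simp add: proj_mult) (auto simp: proj_def fun_eq_iff)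

lemma proj_mult_Zop:
  assumes "1 \<le> j" "j \<le> N"
  shows "mmul N n (proj n j) (Zop n k) = (if j = Suc k then Zop n k else 0)"
  unfolding proj_mult[OF assms] by (intro ext) (auto dest: Zop_nonzeroD)

lemma Zop_mult_proj:
  assumes "1 \<le> j" "j \<le> N"
  shows "mmul N n (Zop n k) (proj n j) = (if j = k then Zop n k else 0)"
  unfolding mult_proj[OF assms] by (intro ext) (auto dest: Zop_nonzeroD)

lemma proj_mult_adj_Zop:
  assumes "1 \<le> j" "j \<le> N"
  shows "mmul N n (proj n j) (adj (Zop n k)) = (if j = k then adj (Zop n k) else 0)"
  using arg_cong[OF Zop_mult_proj[OF assms, where k = k], of adj]
  by (simp add: adj_mmul)

lemma adj_Zop_mult_proj:
  assumes "1 \<le> j" "j \<le> N"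
  shows "mmul N n (adj (Zop n k)) (proj n j) = (if j = Suc k then adj (Zop n k) else 0)"
  using arg_cong[OF proj_mult_Zop[OF assms, where k = k], of adj]
  by (simp add: adj_mmul)

lemma adj_Zop_mult_eq_0:
  assumes "N \<le> k"
  shows "mmul N n (adj (Zop n k)) A = 0"
proof -
  have "Zop n k l i = 0" if "l \<in> basis N n" for l i
  proof (rule ccontr)
    assume "Zop n k l i \<noteq> 0"
    then obtain b where "l = Bs (Suc k) b"
      by (auto dest: Zop_nonzeroD)
    then show False
      using that assms by (auto simp: basis_def)
  qed
  then show ?thesis
    unfolding mmul_def adj_def by (intro ext) simp
qed

lemma absZ_eq_0: "N \<le> k \<Longrightarrow> absZ N n k = 0"
  by (simp add: absZ_def adj_Zop_mult_eq_0)

lemma adj_absZ [simp]: "adj (absZ N n k) = absZ N n k"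
  by (simp add: absZ_def adj_mmul)

lemma proj_mult_absZ:
  "1 \<le> j \<Longrightarrow> j \<le> N \<Longrightarrow> mmul N n (proj n j) (absZ N n k) = (if j = k then absZ N n k else 0)"
  by (simp add: absZ_def proj_mult_adj_Zop flip: mmul_assoc)

lemma absZ_mult_proj:
  "1 \<le> j \<Longrightarrow> j \<le> N \<Longrightarrow> mmul N n (absZ N n k) (proj n j) = (if j = k then absZ N n k else 0)"
  by (simp add: absZ_def Zop_mult_proj mmul_assoc)

(* The coefficient of P j in a sum over k of g k * P (k + 1); the top level j = 1 gets none. *)
definition shift_coeff :: "(nat \<Rightarrow> real) \<Rightarrow> nat \<Rightarrow> real" where
  "shift_coeff g j = (if 2 \<le> j then g (j - 1) else 0)"

lemma sum_ladder_delta: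
  assumes "1 \<le> j" "j \<le> N"
  shows "(\<Sum>k\<in>{1..N-1}. (if k = j then X k else 0) + (if Suc k = j then Y k else 0))
       = (if j < N then X j else 0) + (if 2 \<le> j then Y (j - 1) else (0 :: 'a :: comm_monoid_add))"
proof -
  have "Suc k = j \<longleftrightarrow> k = j - 1" for k
    using assms by auto
  moreover have "j \<in> {1..N-1} \<longleftrightarrow> j < N" "j - 1 \<in> {1..N-1} \<longleftrightarrow> 2 \<le> j"
    using assms by auto
  ultimately show ?thesis
    by (simp only: sum.distrib sum.delta[OF finite_atLeastAtMost])
qed

locale ladder =
  fixes N :: nat and n :: "nat \<Rightarrow> nat"
  assumes n_mono: "\<And>k. 1 \<le> k \<Longrightarrow> k < N \<Longrightarrow> n (Suc k) \<le> n k"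
    and n_pos: "\<And>k. 1 \<le> k \<Longrightarrow> k \<le> N \<Longrightarrow> 1 \<le> n k"
begin

abbreviation mult :: "op \<Rightarrow> op \<Rightarrow> op" (infixl \<open>\<cdot>\<close> 70)
  where "A \<cdot> B \<equiv> mmul N n A B"

abbreviation P :: "nat \<Rightarrow> op" where "P j \<equiv> proj n j"
abbreviation Z :: "nat \<Rightarrow> op" where "Z k \<equiv> Zop n k"
abbreviation Q :: "nat \<Rightarrow> op" where "Q k \<equiv> absZ N n k"
abbreviation kerZ :: "nat \<Rightarrow> op" where "kerZ j \<equiv> P j - Q j"

lemma Zop_mult_adj:
  assumes k: "1 \<le> k" "k < N"
  shows "Z k \<cdot> adj (Z k) = P (Suc k)"
proof (intro ext)
  fix i m
  have n_k: "n (Suc k) \<le> n k" "1 \<le> n k"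
    using k n_mono n_pos by auto
  have "(Z k \<cdot> adj (Z k)) i m = (\<Sum>a<n k. Z k i (Bs k a) * cnj (Z k m (Bs k a)))"
    unfolding mmul_def adj_def using k
    by (intro sum_basis_level) (auto dest!: Zop_nonzeroD)
  also have "\<dots> = P (Suc k) i m"
  proof (cases "\<exists>b b'. i = Bs (Suc k) b \<and> m = Bs (Suc k) b' \<and> b < n (Suc k) \<and> b' < n (Suc k)")
    case True
    then obtain b b' where bb': "i = Bs (Suc k) b" "m = Bs (Suc k) b'" "b < n (Suc k)" "b' < n (Suc k)"
      by blast
    have sqrt_sq: "of_real (sqrt (n k)) * of_real (sqrt (n k)) = (of_nat (n k) :: complex)"
      by (simp flip: of_real_mult)
    have "(\<Sum>a<n k. Z k i (Bs k a) * cnj (Z k m (Bs k a)))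
        = (\<Sum>a<n k. zeta n k ^ (b * a) * cnj (zeta n k ^ (b' * a))) / of_nat (n k)"
      using bb' n_k by (simp add: sum_divide_distrib sqrt_sq flip: sqrt_sq)
    also have "\<dots> = (if b = b' then 1 else 0)"
      using root_unity_orthogonality[of b "n k" b'] bb' n_k by (simp add: zeta_eq_cis)
    finally show ?thesis
      using bb' by (simp add: proj_def)
  next
    case False
    have "Z k i (Bs k a) * cnj (Z k m (Bs k a)) = 0" for a
    proof (rule ccontr)
      assume "Z k i (Bs k a) * cnj (Z k m (Bs k a)) \<noteq> 0"
      then have "Z k i (Bs k a) \<noteq> 0" "Z k m (Bs k a) \<noteq> 0"
        by auto
      then show False
        using False by (auto dest!: Zop_nonzeroD)
    qed
    moreover have "P (Suc k) i m = 0"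
      using False by (auto simp: proj_def)
    ultimately show ?thesis
      by (auto intro: sum.neutral)
  qed
  finally show "(Z k \<cdot> adj (Z k)) i m = P (Suc k) i m" .
qed

lemma absZ_idem:
  assumes "1 \<le> k" "k \<le> N"
  shows "Q k \<cdot> Q k = Q k"
proof (cases "k = N")
  case True
  then show ?thesis by (simp add: absZ_eq_0)
next
  case False
  then have "k < N" using assms by simp
  have "Q k \<cdot> Q k = adj (Z k) \<cdot> (Z k \<cdot> adj (Z k)) \<cdot> Z k"
    by (simp add: absZ_def mmul_assoc)
  also have "\<dots> = Q k"
    using assms \<open>k < N\<close> by (simp add: Zop_mult_adj adj_Zop_mult_proj absZ_def)
  finally show ?thesis .
qed

lemma Zop_mult_absZ: "1 \<le> k \<Longrightarrow> k < N \<Longrightarrow> Z k \<cdot> Q k = Z k"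
  by (simp add: absZ_def Zop_mult_adj proj_mult_Zop flip: mmul_assoc)

lemma absZ_mult_adj_Zop: "1 \<le> k \<Longrightarrow> k < N \<Longrightarrow> Q k \<cdot> adj (Z k) = adj (Z k)"
  by (simp add: absZ_def Zop_mult_adj adj_Zop_mult_proj mmul_assoc)

section \<open>Reduction of the generator\<close>

definition ladder_op :: "(nat \<Rightarrow> real) \<Rightarrow> (nat \<Rightarrow> real) \<Rightarrow> op" where
  "ladder_op f g = (\<Sum>k\<in>{1..N-1}. scal (of_real (f k)) (Q k) + scal (of_real (g k)) (P (Suc k)))"

definition jump_op :: "(nat \<Rightarrow> real) \<Rightarrow> (nat \<Rightarrow> real) \<Rightarrow> op \<Rightarrow> op" where
  "jump_op \<Gamma>m \<Gamma>p \<rho> = (\<Sum>k\<in>{1..N-1}.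
     scal (of_real (\<Gamma>m k)) (Z k \<cdot> \<rho> \<cdot> adj (Z k)) + scal (of_real (\<Gamma>p k)) (adj (Z k) \<cdot> \<rho> \<cdot> Z k))"

(* The generator on states supported in Omega (gen_eq_ladder_gen): hQ k and hP k are the
   coefficients gamma_-(omega_k) and -gamma_+(omega_k) of |Z|_k and P_{k+1} in H_eff, and
   \<Gamma>m k, \<Gamma>p k are the rates Gamma_-(omega_k), Gamma_+(omega_k). *)
definition ladder_gen ::
  "(nat \<Rightarrow> real) \<Rightarrow> (nat \<Rightarrow> real) \<Rightarrow> (nat \<Rightarrow> real) \<Rightarrow> (nat \<Rightarrow> real) \<Rightarrow> op \<Rightarrow> op" where
  "ladder_gen hQ hP \<Gamma>m \<Gamma>p \<rho> =
     scal (- \<i>) (ladder_op hQ hP \<cdot> \<rho> - \<rho> \<cdot> ladder_op hQ hP)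
     - scal (1/2) (ladder_op \<Gamma>m \<Gamma>p \<cdot> \<rho> + \<rho> \<cdot> ladder_op \<Gamma>m \<Gamma>p) + jump_op \<Gamma>m \<Gamma>p \<rho>"

lemma Heff_eq:
  "Heff N n em ep e gp gm =
       scal (of_nat (n 1) * of_real (gm (omega_p ep e))) (outer (ket Pl) (ket Pl))
     - scal (of_nat (n 1) * of_real (gp (omega_p ep e))) (outer (phi n 1 0) (phi n 1 0))
     + scal (of_real (gm (omega_m N em e))) (outer (phi n N 0) (phi n N 0))
     - scal (of_real (gp (omega_m N em e))) (outer (ket Mi) (ket Mi))
     + ladder_op (\<lambda>k. gm (omega e k)) (\<lambda>k. - gp (omega e k))"
  unfolding Heff_def ladder_op_def scal_def by (intro ext) (simp add: sum_op_apply)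

lemma dissip_Zop_pair:
  assumes "1 \<le> k" "k < N" "0 \<le> G" "0 \<le> G'"
  shows "dissip N n (scal (of_real (sqrt G)) (Z k)) \<rho> + dissip N n (scal (of_real (sqrt G')) (adj (Z k))) \<rho>
    = scal (of_real G) (Z k \<cdot> \<rho> \<cdot> adj (Z k)) + scal (of_real G') (adj (Z k) \<cdot> \<rho> \<cdot> Z k)
      - scal (1/2) ((scal (of_real G) (Q k) + scal (of_real G') (P (Suc k))) \<cdot> \<rho>
                    + \<rho> \<cdot> (scal (of_real G) (Q k) + scal (of_real G') (P (Suc k))))"
  unfolding dissip_scal_sqrt[OF assms(3)] dissip_scal_sqrt[OF assms(4)]
  unfolding dissip_eq adj_adj absZ_def[symmetric] Zop_mult_adj[OF assms(1,2)]
  by (simp add: mmul_linear) (simp add: scal_def fun_eq_iff algebra_simps)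

lemma sum_dissip_Zop_pairs:
  assumes "\<And>k. 1 \<le> k \<Longrightarrow> k < N \<Longrightarrow> 0 \<le> \<Gamma>m k \<and> 0 \<le> \<Gamma>p k"
  shows "(\<Sum>k\<in>{1..N-1}. dissip N n (scal (of_real (sqrt (\<Gamma>m k))) (Z k)) \<rho>
            + dissip N n (scal (of_real (sqrt (\<Gamma>p k))) (adj (Z k))) \<rho>)
    = jump_op \<Gamma>m \<Gamma>p \<rho> - scal (1/2) (ladder_op \<Gamma>m \<Gamma>p \<cdot> \<rho> + \<rho> \<cdot> ladder_op \<Gamma>m \<Gamma>p)"
proof -
  let ?Dk = "\<lambda>k. scal (of_real (\<Gamma>m k)) (Q k) + scal (of_real (\<Gamma>p k)) (P (Suc k))"
  let ?Jk = "\<lambda>k. scal (of_real (\<Gamma>m k)) (Z k \<cdot> \<rho> \<cdot> adj (Z k)) + scal (of_real (\<Gamma>p k)) (adj (Z k) \<cdot> \<rho> \<cdot> Z k)"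
  have "(\<Sum>k\<in>{1..N-1}. dissip N n (scal (of_real (sqrt (\<Gamma>m k))) (Z k)) \<rho>
            + dissip N n (scal (of_real (sqrt (\<Gamma>p k))) (adj (Z k))) \<rho>)
      = (\<Sum>k\<in>{1..N-1}. ?Jk k - scal (1/2) (?Dk k \<cdot> \<rho> + \<rho> \<cdot> ?Dk k))"
  proof (intro sum.cong refl)
    fix k
    assume "k \<in> {1..N-1}"
    then have "1 \<le> k" "k < N" by auto
    then show "dissip N n (scal (of_real (sqrt (\<Gamma>m k))) (Z k)) \<rho>
            + dissip N n (scal (of_real (sqrt (\<Gamma>p k))) (adj (Z k))) \<rho>
        = ?Jk k - scal (1/2) (?Dk k \<cdot> \<rho> + \<rho> \<cdot> ?Dk k)"
      using assms by (simp add: dissip_Zop_pair)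
  qed
  moreover have "(\<Sum>k\<in>{1..N-1}. scal (1/2) (?Dk k \<cdot> \<rho> + \<rho> \<cdot> ?Dk k))
      = scal (1/2) (ladder_op \<Gamma>m \<Gamma>p \<cdot> \<rho> + \<rho> \<cdot> ladder_op \<Gamma>m \<Gamma>p)"
    unfolding ladder_op_def mmul_sum_left mmul_sum_right
    by (simp only: scal_sum_right scal_add_right sum.distrib)
  ultimately show ?thesis
    unfolding jump_op_def by (simp only: sum_subtractf)
qed

lemma gen_eq_ladder_gen:
  assumes op: "is_op N n \<rho>" and herm: "adj \<rho> = \<rho>" and supp: "supported_Omega N n \<rho>"
    and rates: "\<And>k. 1 \<le> k \<Longrightarrow> k < N \<Longrightarrow> 0 \<le> Gm (omega e k) \<and> 0 \<le> Gp (omega e k)"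
  shows "gen N n em ep e Gp Gm gp gm \<rho> = ladder_gen (\<lambda>k. gm (omega e k)) (\<lambda>k. - gp (omega e k))
           (\<lambda>k. Gm (omega e k)) (\<lambda>k. Gp (omega e k)) \<rho>"
proof -
  have outer_mult: "outer x u \<cdot> \<rho> = 0" and mult_outer: "\<rho> \<cdot> outer u x = 0"
    if "u \<in> {ket Mi, ket Pl, phi n 1 0, phi n N 0}" for u x
    using supported_Omega_outer_mult[OF supp op that] supported_Omega_mult_outer[OF supp op herm that]
    by auto
  have dissip_outer: "dissip N n (scal c (outer x u)) \<rho> = 0"
    if "u \<in> {ket Mi, ket Pl, phi n 1 0, phi n N 0}" for c x u
    using that by (intro dissip_eq_0) (simp_all add: mmul_scal_left mmul_scal_right adj_scal adj_outer
        outer_mult mult_outer)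
  have "L_p_wm = 0"
    unfolding L_p_wm_def by (simp add: fun_eq_iff)
  then have outer_terms: "dissip N n (L_m_wp n ep e Gm) \<rho> = 0" "dissip N n (L_p_wp n ep e Gp) \<rho> = 0"
    "dissip N n (L_m_wm N n em e Gm) \<rho> = 0" "dissip N n L_p_wm \<rho> = 0"
    unfolding L_m_wp_def L_p_wp_def L_m_wm_def by (auto intro: dissip_outer dissip_eq_0)
  have "gen N n em ep e Gp Gm gp gm \<rho>
      = scal (- \<i>) (Heff N n em ep e gp gm \<cdot> \<rho> - \<rho> \<cdot> Heff N n em ep e gp gm)
        + (\<Sum>k\<in>{1..N-1}. dissip N n (L_m_wk n e Gm k) \<rho> + dissip N n (L_p_wk n e Gp k) \<rho>)"
    unfolding gen_def by (intro ext) (simp add: outer_terms scal_def sum_op_apply)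
  also have "Heff N n em ep e gp gm \<cdot> \<rho> - \<rho> \<cdot> Heff N n em ep e gp gm
      = ladder_op (\<lambda>k. gm (omega e k)) (\<lambda>k. - gp (omega e k)) \<cdot> \<rho>
        - \<rho> \<cdot> ladder_op (\<lambda>k. gm (omega e k)) (\<lambda>k. - gp (omega e k))"
    unfolding Heff_eq by (simp add: mmul_linear outer_mult mult_outer)
  also have "(\<Sum>k\<in>{1..N-1}. dissip N n (L_m_wk n e Gm k) \<rho> + dissip N n (L_p_wk n e Gp k) \<rho>)
      = jump_op (\<lambda>k. Gm (omega e k)) (\<lambda>k. Gp (omega e k)) \<rho>
        - scal (1/2) (ladder_op (\<lambda>k. Gm (omega e k)) (\<lambda>k. Gp (omega e k)) \<cdot> \<rho>
          + \<rho> \<cdot> ladder_op (\<lambda>k. Gm (omega e k)) (\<lambda>k. Gp (omega e k)))"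
    unfolding L_m_wk_def L_p_wk_def using rates by (rule sum_dissip_Zop_pairs)
  finally show ?thesis
    unfolding ladder_gen_def by (simp only: add_diff_eq diff_add_eq)
qed

section \<open>Block calculus\<close>

lemma proj_mult_ladder_op:
  assumes "1 \<le> j" "j \<le> N"
  shows "P j \<cdot> ladder_op f g = scal (of_real (f j)) (Q j) + scal (of_real (shift_coeff g j)) (P j)"
proof -
  have "P j \<cdot> ladder_op f g = (\<Sum>k\<in>{1..N-1}.
      (if k = j then scal (of_real (f k)) (Q j) else 0) + (if Suc k = j then scal (of_real (g k)) (P j) else 0))"
    unfolding ladder_op_def mmul_sum_right using assms
    by (intro sum.cong refl) (auto simp: mmul_add_right mmul_scal_right proj_mult_absZ proj_mult_proj)
  also have "\<dots> = (if j < N then scal (of_real (f j)) (Q j) else 0)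
      + (if 2 \<le> j then scal (of_real (g (j - 1))) (P j) else 0)"
    by (rule sum_ladder_delta[OF assms])
  also have "\<dots> = scal (of_real (f j)) (Q j) + scal (of_real (shift_coeff g j)) (P j)"
    using assms by (auto simp: shift_coeff_def absZ_eq_0)
  finally show ?thesis .
qed

lemma ladder_op_mult_proj:
  assumes "1 \<le> j" "j \<le> N"
  shows "ladder_op f g \<cdot> P j = scal (of_real (f j)) (Q j) + scal (of_real (shift_coeff g j)) (P j)"
proof -
  have "ladder_op f g \<cdot> P j = (\<Sum>k\<in>{1..N-1}.
      (if k = j then scal (of_real (f k)) (Q j) else 0) + (if Suc k = j then scal (of_real (g k)) (P j) else 0))"
    unfolding ladder_op_def mmul_sum_left using assms
    by (intro sum.cong refl) (auto simp: mmul_add_left mmul_scal_left absZ_mult_proj proj_mult_proj)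
  also have "\<dots> = (if j < N then scal (of_real (f j)) (Q j) else 0)
      + (if 2 \<le> j then scal (of_real (g (j - 1))) (P j) else 0)"
    by (rule sum_ladder_delta[OF assms])
  also have "\<dots> = scal (of_real (f j)) (Q j) + scal (of_real (shift_coeff g j)) (P j)"
    using assms by (auto simp: shift_coeff_def absZ_eq_0)
  finally show ?thesis .
qed

lemma absZ_mult_ladder_op:
  assumes "1 \<le> j" "j \<le> N"
  shows "Q j \<cdot> ladder_op f g = scal (of_real (f j + shift_coeff g j)) (Q j)"
proof -
  have "Q j \<cdot> ladder_op f g = Q j \<cdot> (P j \<cdot> ladder_op f g)"
    using absZ_mult_proj[OF assms, where k = j] by (simp flip: mmul_assoc)
  then show ?thesis
    using assms by (simp add: proj_mult_ladder_op mmul_linear absZ_idem absZ_mult_proj scal_add_left)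
qed

lemma ladder_op_mult_absZ:
  assumes "1 \<le> j" "j \<le> N"
  shows "ladder_op f g \<cdot> Q j = scal (of_real (f j + shift_coeff g j)) (Q j)"
proof -
  have "ladder_op f g \<cdot> Q j = ladder_op f g \<cdot> P j \<cdot> Q j"
    using proj_mult_absZ[OF assms, where k = j] by (simp add: mmul_assoc)
  then show ?thesis
    using assms by (simp add: ladder_op_mult_proj mmul_linear absZ_idem proj_mult_absZ scal_add_left)
qed

lemma kerZ_mult_ladder_op:
  assumes "1 \<le> j" "j \<le> N"
  shows "kerZ j \<cdot> ladder_op f g = scal (of_real (shift_coeff g j)) (kerZ j)"
  using assms by (simp add: mmul_diff_left proj_mult_ladder_op absZ_mult_ladder_op scal_add_left scal_diff_right)

lemma ladder_op_mult_kerZ: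
  assumes "1 \<le> j" "j \<le> N"
  shows "ladder_op f g \<cdot> kerZ j = scal (of_real (shift_coeff g j)) (kerZ j)"
  using assms by (simp add: mmul_diff_right ladder_op_mult_proj ladder_op_mult_absZ scal_add_left scal_diff_right)

lemma proj_mult_jump_op_mult_proj:
  assumes j: "1 \<le> j" "j \<le> N" and l: "1 \<le> l" "l \<le> N"
  shows "P j \<cdot> jump_op \<Gamma>m \<Gamma>p \<rho> \<cdot> P l =
    (if j = l then scal (of_real (\<Gamma>p j)) (adj (Z j) \<cdot> \<rho> \<cdot> Z j)
        + scal (of_real (shift_coeff \<Gamma>m j)) (Z (j - 1) \<cdot> \<rho> \<cdot> adj (Z (j - 1)))
     else 0)"
proof -
  have down: "P j \<cdot> (Z k \<cdot> \<rho> \<cdot> adj (Z k)) \<cdot> P l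
      = (if j = Suc k \<and> l = Suc k then Z k \<cdot> \<rho> \<cdot> adj (Z k) else 0)" for k
  proof -
    have "P j \<cdot> (Z k \<cdot> \<rho> \<cdot> adj (Z k)) \<cdot> P l = (P j \<cdot> Z k) \<cdot> \<rho> \<cdot> (adj (Z k) \<cdot> P l)"
      by (simp add: mmul_assoc)
    then show ?thesis
      using j l by (simp add: proj_mult_Zop adj_Zop_mult_proj)
  qed
  have up: "P j \<cdot> (adj (Z k) \<cdot> \<rho> \<cdot> Z k) \<cdot> P l
      = (if j = k \<and> l = k then adj (Z k) \<cdot> \<rho> \<cdot> Z k else 0)" for k
  proof -
    have "P j \<cdot> (adj (Z k) \<cdot> \<rho> \<cdot> Z k) \<cdot> P l = (P j \<cdot> adj (Z k)) \<cdot> \<rho> \<cdot> (Z k \<cdot> P l)"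
      by (simp add: mmul_assoc)
    then show ?thesis
      using j l by (simp add: proj_mult_adj_Zop Zop_mult_proj)
  qed
  show ?thesis
  proof (cases "j = l")
    case True
    have "P j \<cdot> jump_op \<Gamma>m \<Gamma>p \<rho> \<cdot> P l = (\<Sum>k\<in>{1..N-1}.
        (if k = j then scal (of_real (\<Gamma>p k)) (adj (Z k) \<cdot> \<rho> \<cdot> Z k) else 0)
        + (if Suc k = j then scal (of_real (\<Gamma>m k)) (Z k \<cdot> \<rho> \<cdot> adj (Z k)) else 0))"
      unfolding jump_op_def mmul_sum_left mmul_sum_right
      by (intro sum.cong refl)
        (simp add: mmul_add_left mmul_add_right mmul_scal_left mmul_scal_right down up, use True in auto)
    also have "\<dots> = (if j < N then scal (of_real (\<Gamma>p j)) (adj (Z j) \<cdot> \<rho> \<cdot> Z j) else 0)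
        + (if 2 \<le> j then scal (of_real (\<Gamma>m (j - 1))) (Z (j - 1) \<cdot> \<rho> \<cdot> adj (Z (j - 1))) else 0)"
      by (rule sum_ladder_delta[OF j])
    also have "\<dots> = scal (of_real (\<Gamma>p j)) (adj (Z j) \<cdot> \<rho> \<cdot> Z j)
        + scal (of_real (shift_coeff \<Gamma>m j)) (Z (j - 1) \<cdot> \<rho> \<cdot> adj (Z (j - 1)))"
      using j by (auto simp: shift_coeff_def adj_Zop_mult_eq_0)
    finally show ?thesis
      using True by simp
  next
    case False
    then show ?thesis
      unfolding jump_op_def mmul_sum_left mmul_sum_right
      by (auto simp: mmul_add_left mmul_add_right mmul_scal_left mmul_scal_right down up intro: sum.neutral)
  qed
qed

lemma sandwich_ladder_gen:
  assumes "S \<cdot> ladder_op hQ hP = scal (of_real hs) S" "ladder_op hQ hP \<cdot> T = scal (of_real ht) T"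
    and "S \<cdot> ladder_op \<Gamma>m \<Gamma>p = scal (of_real ds) S" "ladder_op \<Gamma>m \<Gamma>p \<cdot> T = scal (of_real dt) T"
  shows "S \<cdot> ladder_gen hQ hP \<Gamma>m \<Gamma>p \<rho> \<cdot> T
    = S \<cdot> jump_op \<Gamma>m \<Gamma>p \<rho> \<cdot> T - scal (\<i> * of_real (hs - ht) + of_real (ds + dt) / 2) (S \<cdot> \<rho> \<cdot> T)"
proof -
  have left: "S \<cdot> (A \<cdot> \<rho>) \<cdot> T = scal (of_real a) (S \<cdot> \<rho> \<cdot> T)" if "S \<cdot> A = scal (of_real a) S" for A a
    using that by (simp add: mmul_scal_left flip: mmul_assoc)
  have right: "S \<cdot> (\<rho> \<cdot> A) \<cdot> T = scal (of_real a) (S \<cdot> \<rho> \<cdot> T)" if "A \<cdot> T = scal (of_real a) T" for A a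
    using that by (simp add: mmul_scal_right mmul_assoc)
  have "S \<cdot> ladder_gen hQ hP \<Gamma>m \<Gamma>p \<rho> \<cdot> T
      = scal (- \<i>) (scal (of_real hs) (S \<cdot> \<rho> \<cdot> T) - scal (of_real ht) (S \<cdot> \<rho> \<cdot> T))
        - scal (1/2) (scal (of_real ds) (S \<cdot> \<rho> \<cdot> T) + scal (of_real dt) (S \<cdot> \<rho> \<cdot> T))
        + S \<cdot> jump_op \<Gamma>m \<Gamma>p \<rho> \<cdot> T"
    unfolding ladder_gen_def
    by (simp only: mmul_linear left[OF assms(1)] right[OF assms(2)] left[OF assms(3)] right[OF assms(4)])
  also have "\<dots> = S \<cdot> jump_op \<Gamma>m \<Gamma>p \<rho> \<cdot> T
      - scal (\<i> * of_real (hs - ht) + of_real (ds + dt) / 2) (S \<cdot> \<rho> \<cdot> T)"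
    by (simp add: scal_def fun_eq_iff algebra_simps)
  finally show ?thesis .
qed

section \<open>Invariant states\<close>

lemma balance_down:
  assumes k: "1 \<le> k" "k < N"
    and balance: "scal (of_real G) (Q k \<cdot> \<rho> \<cdot> Q k) = scal (of_real G') (adj (Z k) \<cdot> \<rho> \<cdot> Z k)"
  shows "scal (of_real G) (Z k \<cdot> \<rho> \<cdot> adj (Z k)) = scal (of_real G') (P (Suc k) \<cdot> \<rho> \<cdot> P (Suc k))"
proof -
  have "Z k \<cdot> \<rho> \<cdot> adj (Z k) = (Z k \<cdot> Q k) \<cdot> \<rho> \<cdot> (Q k \<cdot> adj (Z k))"
    using k by (simp add: Zop_mult_absZ absZ_mult_adj_Zop)
  then have "scal (of_real G) (Z k \<cdot> \<rho> \<cdot> adj (Z k)) = Z k \<cdot> scal (of_real G) (Q k \<cdot> \<rho> \<cdot> Q k) \<cdot> adj (Z k)"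
    by (simp add: mmul_scal_left mmul_scal_right mmul_assoc)
  also have "\<dots> = scal (of_real G') ((Z k \<cdot> adj (Z k)) \<cdot> \<rho> \<cdot> (Z k \<cdot> adj (Z k)))"
    unfolding balance by (simp add: mmul_scal_left mmul_scal_right mmul_assoc)
  finally show ?thesis
    using k by (simp add: Zop_mult_adj)
qed

lemma proj_mult_jump_op_mult_proj_diag:
  assumes j: "1 \<le> j" "j \<le> N"
    and balance: "2 \<le> j \<Longrightarrow> scal (of_real (\<Gamma>m (j - 1))) (Q (j - 1) \<cdot> \<rho> \<cdot> Q (j - 1))
                      = scal (of_real (\<Gamma>p (j - 1))) (adj (Z (j - 1)) \<cdot> \<rho> \<cdot> Z (j - 1))"
  shows "P j \<cdot> jump_op \<Gamma>m \<Gamma>p \<rho> \<cdot> P j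
       = scal (of_real (\<Gamma>p j)) (adj (Z j) \<cdot> \<rho> \<cdot> Z j) + scal (of_real (shift_coeff \<Gamma>p j)) (P j \<cdot> \<rho> \<cdot> P j)"
proof (cases "2 \<le> j")
  case True
  then have "scal (of_real (\<Gamma>m (j - 1))) (Z (j - 1) \<cdot> \<rho> \<cdot> adj (Z (j - 1)))
      = scal (of_real (\<Gamma>p (j - 1))) (P j \<cdot> \<rho> \<cdot> P j)"
    using balance_down[of "j - 1", OF _ _ balance] j by simp
  then show ?thesis
    using j True by (simp add: proj_mult_jump_op_mult_proj shift_coeff_def)
next
  case False
  then show ?thesis
    using j by (simp add: proj_mult_jump_op_mult_proj shift_coeff_def)
qed

context
  fixes \<rho> :: op and hQ hP \<Gamma>m \<Gamma>p :: "nat \<Rightarrow> real"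
  assumes rates_pos: "\<And>k. 1 \<le> k \<Longrightarrow> k < N \<Longrightarrow> 0 < \<Gamma>m k \<and> 0 < \<Gamma>p k"
    and herm: "adj \<rho> = \<rho>"
    and levels: "(\<Sum>l\<in>{1..N}. P l \<cdot> \<rho>) = \<rho>" "(\<Sum>l\<in>{1..N}. \<rho> \<cdot> P l) = \<rho>"
    and stationary: "ladder_gen hQ hP \<Gamma>m \<Gamma>p \<rho> = 0"
begin

lemma block_equation:
  assumes "S \<cdot> ladder_op hQ hP = scal (of_real hs) S" "ladder_op hQ hP \<cdot> T = scal (of_real ht) T"
    and "S \<cdot> ladder_op \<Gamma>m \<Gamma>p = scal (of_real ds) S" "ladder_op \<Gamma>m \<Gamma>p \<cdot> T = scal (of_real dt) T"
  shows "S \<cdot> jump_op \<Gamma>m \<Gamma>p \<rho> \<cdot> T = scal (\<i> * of_real (hs - ht) + of_real (ds + dt) / 2) (S \<cdot> \<rho> \<cdot> T)"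
  using sandwich_ladder_gen[OF assms, of \<rho>] stationary by simp

lemma block_vanishes:
  assumes "S \<cdot> ladder_op hQ hP = scal (of_real hs) S" "ladder_op hQ hP \<cdot> T = scal (of_real ht) T"
    and "S \<cdot> ladder_op \<Gamma>m \<Gamma>p = scal (of_real ds) S" "ladder_op \<Gamma>m \<Gamma>p \<cdot> T = scal (of_real dt) T"
    and "S \<cdot> jump_op \<Gamma>m \<Gamma>p \<rho> \<cdot> T = 0" "0 < ds + dt"
  shows "S \<cdot> \<rho> \<cdot> T = 0"
proof -
  let ?c = "\<i> * of_real (hs - ht) + of_real (ds + dt) / 2"
  have "Re ?c > 0"
    using assms(6) by simp
  then have "?c \<noteq> 0"
    by (metis less_irrefl zero_complex.sel(1))
  moreover have "scal ?c (S \<cdot> \<rho> \<cdot> T) = 0"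
    using block_equation[OF assms(1-4)] assms(5) by metis
  ultimately show ?thesis
    by (simp only: scal_eq_0_iff) simp
qed

lemma shift_rate_nonneg: "j \<le> N \<Longrightarrow> 0 \<le> shift_coeff \<Gamma>p j"
  using rates_pos[of "j - 1"] by (simp add: shift_coeff_def less_imp_le)

lemma shift_rate_pos: "2 \<le> j \<Longrightarrow> j \<le> N \<Longrightarrow> 0 < shift_coeff \<Gamma>p j"
  using rates_pos[of "j - 1"] by (simp add: shift_coeff_def)

lemma cross_level_block_eq_0:
  assumes j: "1 \<le> j" "j \<le> N" and l: "1 \<le> l" "l \<le> N" and "j \<noteq> l"
    and "S \<cdot> P j = S" "P l \<cdot> T = T"
    and "S \<cdot> ladder_op hQ hP = scal (of_real hs) S" "ladder_op hQ hP \<cdot> T = scal (of_real ht) T"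
    and "S \<cdot> ladder_op \<Gamma>m \<Gamma>p = scal (of_real ds) S" "ladder_op \<Gamma>m \<Gamma>p \<cdot> T = scal (of_real dt) T"
    and "0 < ds + dt"
  shows "S \<cdot> \<rho> \<cdot> T = 0"
proof (rule block_vanishes[OF assms(8-11) _ assms(12)])
  have "S \<cdot> jump_op \<Gamma>m \<Gamma>p \<rho> \<cdot> T = S \<cdot> (P j \<cdot> jump_op \<Gamma>m \<Gamma>p \<rho> \<cdot> P l) \<cdot> T"
    using assms(6,7) by (metis mmul_assoc)
  then show "S \<cdot> jump_op \<Gamma>m \<Gamma>p \<rho> \<cdot> T = 0"
    using j l \<open>j \<noteq> l\<close> by (simp add: proj_mult_jump_op_mult_proj)
qed

lemma off_diagonal_block_eq_0:
  assumes j: "1 \<le> j" "j \<le> N" and l: "1 \<le> l" "l \<le> N" and "j \<noteq> l"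
  shows "P j \<cdot> \<rho> \<cdot> P l = 0"
proof -
  note block = cross_level_block_eq_0[OF j l \<open>j \<noteq> l\<close>]
  have left: "Q j \<cdot> P j = Q j" "kerZ j \<cdot> P j = kerZ j"
    using j by (simp_all add: mmul_diff_left absZ_mult_proj proj_mult_proj)
  have right: "P l \<cdot> Q l = Q l" "P l \<cdot> kerZ l = kerZ l"
    using l by (simp_all add: mmul_diff_right proj_mult_absZ proj_mult_proj)
  note rates = rates_pos[of j] rates_pos[of l] shift_rate_nonneg[of j] shift_rate_nonneg[of l]
  have "Q j \<cdot> \<rho> \<cdot> Q l = 0"
    using j l rates absZ_eq_0[of N j] absZ_eq_0[of N l]
    by (cases "j = N \<or> l = N") (auto intro: block[OF left(1) right(1) absZ_mult_ladder_op[OF j]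
          ladder_op_mult_absZ[OF l] absZ_mult_ladder_op[OF j] ladder_op_mult_absZ[OF l]])
  moreover have "Q j \<cdot> \<rho> \<cdot> kerZ l = 0"
    using j l rates absZ_eq_0[of N j]
    by (cases "j = N") (auto intro: block[OF left(1) right(2) absZ_mult_ladder_op[OF j]
          ladder_op_mult_kerZ[OF l] absZ_mult_ladder_op[OF j] ladder_op_mult_kerZ[OF l]])
  moreover have "kerZ j \<cdot> \<rho> \<cdot> Q l = 0"
    using j l rates absZ_eq_0[of N l]
    by (cases "l = N") (auto intro: block[OF left(2) right(1) kerZ_mult_ladder_op[OF j]
          ladder_op_mult_absZ[OF l] kerZ_mult_ladder_op[OF j] ladder_op_mult_absZ[OF l]])
  moreover have "0 < shift_coeff \<Gamma>p j + shift_coeff \<Gamma>p l"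
    using j l \<open>j \<noteq> l\<close> shift_rate_pos[of j] shift_rate_pos[of l] rates
    by (cases "2 \<le> j") (auto simp: add_pos_nonneg add_nonneg_pos)
  then have "kerZ j \<cdot> \<rho> \<cdot> kerZ l = 0"
    by (rule block[OF left(2) right(2) kerZ_mult_ladder_op[OF j] ladder_op_mult_kerZ[OF l]
          kerZ_mult_ladder_op[OF j] ladder_op_mult_kerZ[OF l]])
  moreover have "P j \<cdot> \<rho> \<cdot> P l = (Q j + kerZ j) \<cdot> \<rho> \<cdot> (Q l + kerZ l)"
    by simp
  ultimately show ?thesis
    by (simp only: mmul_add_left mmul_add_right) simp
qed

lemma proj_mult_eq_diagonal_block:
  assumes "1 \<le> j" "j \<le> N"
  shows "P j \<cdot> \<rho> = P j \<cdot> \<rho> \<cdot> P j"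
proof -
  have "P j \<cdot> \<rho> = (\<Sum>l\<in>{1..N}. P j \<cdot> \<rho> \<cdot> P l)"
    by (subst (1) levels(2)[symmetric]) (simp add: mmul_sum_right mmul_assoc)
  also have "\<dots> = (\<Sum>l\<in>{1..N}. if l = j then P j \<cdot> \<rho> \<cdot> P j else 0)"
    using assms off_diagonal_block_eq_0 by (intro sum.cong) auto
  finally show ?thesis
    using assms by simp
qed

lemma mult_proj_eq_diagonal_block:
  assumes "1 \<le> j" "j \<le> N"
  shows "\<rho> \<cdot> P j = P j \<cdot> \<rho> \<cdot> P j"
proof -
  have "\<rho> \<cdot> P j = (\<Sum>l\<in>{1..N}. P l \<cdot> \<rho> \<cdot> P j)"
    by (subst (1) levels(1)[symmetric]) (simp add: mmul_sum_left)
  also have "\<dots> = (\<Sum>l\<in>{1..N}. if l = j then P j \<cdot> \<rho> \<cdot> P j else 0)"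
    using assms off_diagonal_block_eq_0 by (intro sum.cong) auto
  finally show ?thesis
    using assms by simp
qed

lemma detailed_balance:
  "1 \<le> k \<Longrightarrow> k < N \<Longrightarrow>
     scal (of_real (\<Gamma>m k)) (Q k \<cdot> \<rho> \<cdot> Q k) = scal (of_real (\<Gamma>p k)) (adj (Z k) \<cdot> \<rho> \<cdot> Z k)"
proof (induction k rule: less_induct)
  case (less k)
  then have k: "1 \<le> k" "k \<le> N" by auto
  let ?Y = "Q k \<cdot> \<rho> \<cdot> Q k" and ?W = "adj (Z k) \<cdot> \<rho> \<cdot> Z k"
  have "Q k \<cdot> P k = Q k" "P k \<cdot> Q k = Q k"
    using k by (simp_all add: absZ_mult_proj proj_mult_absZ)
  then have "Q k \<cdot> jump_op \<Gamma>m \<Gamma>p \<rho> \<cdot> Q k = Q k \<cdot> (P k \<cdot> jump_op \<Gamma>m \<Gamma>p \<rho> \<cdot> P k) \<cdot> Q k"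
    by (metis mmul_assoc)
  also have "\<dots> = scal (of_real (\<Gamma>p k)) ((Q k \<cdot> adj (Z k)) \<cdot> \<rho> \<cdot> (Z k \<cdot> Q k))
      + scal (of_real (shift_coeff \<Gamma>p k)) ((Q k \<cdot> P k) \<cdot> \<rho> \<cdot> (P k \<cdot> Q k))"
    using less.IH[of "k - 1"] less.prems
    by (subst proj_mult_jump_op_mult_proj_diag[OF k]) (simp_all add: mmul_linear mmul_assoc)
  also have "\<dots> = scal (of_real (\<Gamma>p k)) ?W + scal (of_real (shift_coeff \<Gamma>p k)) ?Y"
    using less.prems k by (simp add: absZ_mult_adj_Zop Zop_mult_absZ absZ_mult_proj proj_mult_absZ)
  finally have "Q k \<cdot> jump_op \<Gamma>m \<Gamma>p \<rho> \<cdot> Q k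
      = scal (of_real (\<Gamma>p k)) ?W + scal (of_real (shift_coeff \<Gamma>p k)) ?Y" .
  moreover have "Q k \<cdot> jump_op \<Gamma>m \<Gamma>p \<rho> \<cdot> Q k
      = scal (of_real (\<Gamma>m k)) ?Y + scal (of_real (shift_coeff \<Gamma>p k)) ?Y"
    using block_equation[OF absZ_mult_ladder_op[OF k] ladder_op_mult_absZ[OF k]
        absZ_mult_ladder_op[OF k] ladder_op_mult_absZ[OF k]]
    by (simp add: scal_add_left add_divide_distrib)
  ultimately show ?case
    by simp
qed

lemma absZ_block_kerZ_eq_0:
  assumes "1 \<le> k" "k < N"
  shows "Q k \<cdot> \<rho> \<cdot> kerZ k = 0"
proof -
  have k: "1 \<le> k" "k \<le> N"
    using assms by auto
  let ?Y = "Q k \<cdot> \<rho> \<cdot> kerZ k"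
  let ?s = "shift_coeff \<Gamma>p k"
  have "Q k \<cdot> P k = Q k" "P k \<cdot> kerZ k = kerZ k"
    using k by (simp_all add: absZ_mult_proj proj_mult_proj proj_mult_absZ mmul_diff_right)
  then have "Q k \<cdot> jump_op \<Gamma>m \<Gamma>p \<rho> \<cdot> kerZ k = Q k \<cdot> (P k \<cdot> jump_op \<Gamma>m \<Gamma>p \<rho> \<cdot> P k) \<cdot> kerZ k"
    by (metis mmul_assoc)
  also have "\<dots> = scal (of_real (\<Gamma>p k)) ((Q k \<cdot> adj (Z k)) \<cdot> \<rho> \<cdot> (Z k \<cdot> kerZ k))
      + scal (of_real ?s) ((Q k \<cdot> P k) \<cdot> \<rho> \<cdot> (P k \<cdot> kerZ k))"
    using detailed_balance[of "k - 1"] assms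
    by (subst proj_mult_jump_op_mult_proj_diag[OF k])
      (simp_all add: mmul_add_left mmul_add_right mmul_scal_left mmul_scal_right mmul_assoc)
  also have "\<dots> = scal (of_real ?s) ?Y"
    using k assms by (simp add: mmul_diff_right Zop_mult_proj Zop_mult_absZ absZ_mult_proj proj_mult_proj
        proj_mult_absZ)
  finally have "Q k \<cdot> jump_op \<Gamma>m \<Gamma>p \<rho> \<cdot> kerZ k = scal (of_real ?s) ?Y" .
  moreover have "Q k \<cdot> jump_op \<Gamma>m \<Gamma>p \<rho> \<cdot> kerZ k
      = scal (\<i> * of_real (hQ k) + of_real (\<Gamma>m k) / 2) ?Y + scal (of_real ?s) ?Y"
    using block_equation[OF absZ_mult_ladder_op[OF k] ladder_op_mult_kerZ[OF k]
        absZ_mult_ladder_op[OF k] ladder_op_mult_kerZ[OF k]]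
    by (simp add: scal_add_left add_divide_distrib algebra_simps)
  ultimately have "scal (\<i> * of_real (hQ k) + of_real (\<Gamma>m k) / 2) ?Y = 0"
    by simp
  moreover have "\<i> * of_real (hQ k) + of_real (\<Gamma>m k) / 2 \<noteq> 0"
    using rates_pos[OF assms] by (auto simp: complex_eq_iff)
  ultimately show ?thesis
    by (simp add: scal_eq_0_iff)
qed

lemma absZ_mult_eq_diagonal_block:
  assumes "1 \<le> k" "k < N"
  shows "Q k \<cdot> \<rho> = Q k \<cdot> \<rho> \<cdot> Q k"
proof -
  have k: "1 \<le> k" "k \<le> N"
    using assms by auto
  have QP: "Q k \<cdot> P k = Q k"
    using k by (simp add: absZ_mult_proj)
  then have "Q k \<cdot> \<rho> = Q k \<cdot> (P k \<cdot> \<rho>)"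
    by (metis mmul_assoc)
  also have "\<dots> = Q k \<cdot> \<rho> \<cdot> P k"
    using QP proj_mult_eq_diagonal_block[OF k] by (metis mmul_assoc)
  also have "\<dots> = Q k \<cdot> \<rho> \<cdot> (Q k + kerZ k)"
    by simp
  also have "\<dots> = Q k \<cdot> \<rho> \<cdot> Q k"
    by (simp only: mmul_add_right absZ_block_kerZ_eq_0[OF assms] add_0_right)
  finally show ?thesis .
qed

lemma mult_absZ_eq_diagonal_block:
  assumes "1 \<le> k" "k < N"
  shows "\<rho> \<cdot> Q k = Q k \<cdot> \<rho> \<cdot> Q k"
  using arg_cong[OF absZ_mult_eq_diagonal_block[OF assms], of adj] herm
  by (simp add: adj_mmul mmul_assoc)

lemma stationary_imp_conditions:
  assumes "1 \<le> k" "k < N"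
  shows "\<rho> \<cdot> Q k = Q k \<cdot> \<rho> \<and> \<rho> \<cdot> P (Suc k) = P (Suc k) \<cdot> \<rho>
    \<and> adj (Z k) \<cdot> \<rho> \<cdot> Z k = scal (of_real (\<Gamma>m k / \<Gamma>p k)) (\<rho> \<cdot> Q k)"
proof (intro conjI)
  show "\<rho> \<cdot> Q k = Q k \<cdot> \<rho>"
    using absZ_mult_eq_diagonal_block[OF assms] mult_absZ_eq_diagonal_block[OF assms] by simp
  show "\<rho> \<cdot> P (Suc k) = P (Suc k) \<cdot> \<rho>"
    using assms proj_mult_eq_diagonal_block[of "Suc k"] mult_proj_eq_diagonal_block[of "Suc k"] by simp
  have "scal (of_real (\<Gamma>p k)) (adj (Z k) \<cdot> \<rho> \<cdot> Z k) = scal (of_real (\<Gamma>m k)) (\<rho> \<cdot> Q k)"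
    using detailed_balance[OF assms] mult_absZ_eq_diagonal_block[OF assms] by simp
  then have "scal (1 / of_real (\<Gamma>p k)) (scal (of_real (\<Gamma>p k)) (adj (Z k) \<cdot> \<rho> \<cdot> Z k))
      = scal (1 / of_real (\<Gamma>p k)) (scal (of_real (\<Gamma>m k)) (\<rho> \<cdot> Q k))"
    by simp
  then show "adj (Z k) \<cdot> \<rho> \<cdot> Z k = scal (of_real (\<Gamma>m k / \<Gamma>p k)) (\<rho> \<cdot> Q k)"
    using rates_pos[OF assms] by simp
qed

end

lemma ladder_op_commute:
  assumes "\<And>k. 1 \<le> k \<Longrightarrow> k < N \<Longrightarrow> \<rho> \<cdot> Q k = Q k \<cdot> \<rho> \<and> \<rho> \<cdot> P (Suc k) = P (Suc k) \<cdot> \<rho>"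
  shows "\<rho> \<cdot> ladder_op f g = ladder_op f g \<cdot> \<rho>"
  unfolding ladder_op_def mmul_sum_left mmul_sum_right
  by (intro sum.cong refl) (use assms in \<open>auto simp: mmul_add_left mmul_add_right mmul_scal_left mmul_scal_right\<close>)

lemma conditions_imp_stationary:
  assumes rates_pos: "\<And>k. 1 \<le> k \<Longrightarrow> k < N \<Longrightarrow> 0 < \<Gamma>m k \<and> 0 < \<Gamma>p k"
    and cond: "\<And>k. 1 \<le> k \<Longrightarrow> k < N \<Longrightarrow> \<rho> \<cdot> Q k = Q k \<cdot> \<rho> \<and> \<rho> \<cdot> P (Suc k) = P (Suc k) \<cdot> \<rho>
        \<and> adj (Z k) \<cdot> \<rho> \<cdot> Z k = scal (of_real (\<Gamma>m k / \<Gamma>p k)) (\<rho> \<cdot> Q k)"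
  shows "ladder_gen hQ hP \<Gamma>m \<Gamma>p \<rho> = 0"
proof -
  have "jump_op \<Gamma>m \<Gamma>p \<rho> = ladder_op \<Gamma>m \<Gamma>p \<cdot> \<rho>"
    unfolding jump_op_def ladder_op_def mmul_sum_left
  proof (intro sum.cong refl)
    fix k
    assume "k \<in> {1..N-1}"
    then have k: "1 \<le> k" "k < N" "1 \<le> Suc k" "Suc k \<le> N"
      by auto
    note comm = cond[OF k(1,2)]
    have "Q k \<cdot> \<rho> \<cdot> Q k = Q k \<cdot> \<rho>"
      using comm absZ_idem[of k] k by (simp add: mmul_assoc flip: mmul_assoc[of N n "Q k"])
    then have up: "scal (of_real (\<Gamma>p k)) (adj (Z k) \<cdot> \<rho> \<cdot> Z k) = scal (of_real (\<Gamma>m k)) (Q k \<cdot> \<rho> \<cdot> Q k)"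
      using comm rates_pos[OF k(1,2)] by simp
    have "P (Suc k) \<cdot> \<rho> \<cdot> P (Suc k) = P (Suc k) \<cdot> \<rho>"
      using comm proj_mult_proj[OF k(3,4), where l = "Suc k"] by (simp add: mmul_assoc flip: mmul_assoc[of N n "P (Suc k)"])
    then have down: "scal (of_real (\<Gamma>m k)) (Z k \<cdot> \<rho> \<cdot> adj (Z k)) = scal (of_real (\<Gamma>p k)) (P (Suc k) \<cdot> \<rho>)"
      using balance_down[OF k(1,2) up[symmetric]] by simp
    show "scal (of_real (\<Gamma>m k)) (Z k \<cdot> \<rho> \<cdot> adj (Z k)) + scal (of_real (\<Gamma>p k)) (adj (Z k) \<cdot> \<rho> \<cdot> Z k)
        = (scal (of_real (\<Gamma>m k)) (Q k) + scal (of_real (\<Gamma>p k)) (P (Suc k))) \<cdot> \<rho>"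
      using down up \<open>Q k \<cdot> \<rho> \<cdot> Q k = Q k \<cdot> \<rho>\<close> by (simp add: mmul_add_left mmul_scal_left add.commute)
  qed
  moreover have "\<rho> \<cdot> ladder_op hQ hP = ladder_op hQ hP \<cdot> \<rho>" "\<rho> \<cdot> ladder_op \<Gamma>m \<Gamma>p = ladder_op \<Gamma>m \<Gamma>p \<cdot> \<rho>"
    using cond by (blast intro: ladder_op_commute)+
  ultimately show ?thesis
    unfolding ladder_gen_def by (simp add: scal_def fun_eq_iff)
qed

lemma supported_state_kills:
  assumes "is_state N n \<rho>" "supported_Omega N n \<rho>"
  shows "outer (ket Mi) (ket Mi) \<cdot> \<rho> = 0" "outer (ket Pl) (ket Pl) \<cdot> \<rho> = 0"
    "\<rho> \<cdot> outer (ket Mi) (ket Mi) = 0" "\<rho> \<cdot> outer (ket Pl) (ket Pl) = 0"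
  using assms supported_Omega_outer_mult supported_Omega_mult_outer is_state_adj
  by (auto simp: is_state_def)

lemma supported_state_levels:
  assumes "is_state N n \<rho>" "supported_Omega N n \<rho>"
  shows "(\<Sum>l\<in>{1..N}. P l \<cdot> \<rho>) = \<rho>" "(\<Sum>l\<in>{1..N}. \<rho> \<cdot> P l) = \<rho>"
  using mmul_ident_left[of N n \<rho>] mmul_ident_right[of N n \<rho>] assms(1) supported_state_kills[OF assms]
  by (simp_all add: is_state_def ident_eq_sum_proj mmul_linear)

lemma ladder_gen_eq_0_iff:
  assumes "\<And>k. 1 \<le> k \<Longrightarrow> k < N \<Longrightarrow> 0 < \<Gamma>m k \<and> 0 < \<Gamma>p k" "adj \<rho> = \<rho>"
    and "(\<Sum>l\<in>{1..N}. P l \<cdot> \<rho>) = \<rho>" "(\<Sum>l\<in>{1..N}. \<rho> \<cdot> P l) = \<rho>"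
  shows "ladder_gen hQ hP \<Gamma>m \<Gamma>p \<rho> = 0 \<longleftrightarrow>
    (\<forall>k\<in>{1..N-1}. \<rho> \<cdot> Q k = Q k \<cdot> \<rho> \<and> \<rho> \<cdot> P (Suc k) = P (Suc k) \<cdot> \<rho>
       \<and> adj (Z k) \<cdot> \<rho> \<cdot> Z k = scal (of_real (\<Gamma>m k / \<Gamma>p k)) (\<rho> \<cdot> Q k))"
proof
  assume "ladder_gen hQ hP \<Gamma>m \<Gamma>p \<rho> = 0"
  then show "\<forall>k\<in>{1..N-1}. \<rho> \<cdot> Q k = Q k \<cdot> \<rho> \<and> \<rho> \<cdot> P (Suc k) = P (Suc k) \<cdot> \<rho>
       \<and> adj (Z k) \<cdot> \<rho> \<cdot> Z k = scal (of_real (\<Gamma>m k / \<Gamma>p k)) (\<rho> \<cdot> Q k)"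
    using stationary_imp_conditions[where \<rho> = \<rho> and hQ = hQ and hP = hP and \<Gamma>m = \<Gamma>m and \<Gamma>p = \<Gamma>p, OF assms]
    by auto
next
  assume "\<forall>k\<in>{1..N-1}. \<rho> \<cdot> Q k = Q k \<cdot> \<rho> \<and> \<rho> \<cdot> P (Suc k) = P (Suc k) \<cdot> \<rho>
       \<and> adj (Z k) \<cdot> \<rho> \<cdot> Z k = scal (of_real (\<Gamma>m k / \<Gamma>p k)) (\<rho> \<cdot> Q k)"
  then show "ladder_gen hQ hP \<Gamma>m \<Gamma>p \<rho> = 0"
    by (intro conditions_imp_stationary[OF assms(1)]) auto
qed

lemma invariant_iff_detailed_balance:
  assumes state: "is_state N n \<rho>" and supp: "supported_Omega N n \<rho>"
    and rates: "\<And>k. 1 \<le> k \<Longrightarrow> k < N \<Longrightarrow> 0 < Gm (omega e k) \<and> 0 < Gp (omega e k)"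
  shows "invariant N n em ep e Gp Gm gp gm \<rho> \<longleftrightarrow>
    (\<forall>k\<in>{1..N-1}. \<rho> \<cdot> Q k = Q k \<cdot> \<rho> \<and> \<rho> \<cdot> P (Suc k) = P (Suc k) \<cdot> \<rho>
       \<and> adj (Z k) \<cdot> \<rho> \<cdot> Z k = scal (of_real (Gm (omega e k) / Gp (omega e k))) (\<rho> \<cdot> Q k))"
proof -
  have op: "is_op N n \<rho>" and herm: "adj \<rho> = \<rho>"
    using state is_state_adj by (auto simp: is_state_def)
  have "invariant N n em ep e Gp Gm gp gm \<rho> \<longleftrightarrow> ladder_gen (\<lambda>k. gm (omega e k)) (\<lambda>k. - gp (omega e k))
      (\<lambda>k. Gm (omega e k)) (\<lambda>k. Gp (omega e k)) \<rho> = 0"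
    using rates unfolding invariant_def
    by (subst gen_eq_ladder_gen[OF op herm supp]) (auto simp: less_imp_le zero_fun_def)
  also have "\<dots> \<longleftrightarrow> (\<forall>k\<in>{1..N-1}. \<rho> \<cdot> Q k = Q k \<cdot> \<rho> \<and> \<rho> \<cdot> P (Suc k) = P (Suc k) \<cdot> \<rho>
       \<and> adj (Z k) \<cdot> \<rho> \<cdot> Z k = scal (of_real (Gm (omega e k) / Gp (omega e k))) (\<rho> \<cdot> Q k))"
    by (rule ladder_gen_eq_0_iff[OF rates herm supported_state_levels[OF state supp]])
  finally show ?thesis .
qed

lemma HS_eq:
  "HS N n em ep e = scal (of_real em) (outer (ket Mi) (ket Mi)) + scal (of_real ep) (outer (ket Pl) (ket Pl))
     + (\<Sum>k\<in>{1..N}. scal (of_real (e k)) (P k))"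
  unfolding HS_def scal_def by (intro ext) (simp add: sum_op_apply)

lemma commute_HS:
  assumes state: "is_state N n \<rho>" and supp: "supported_Omega N n \<rho>" and "1 \<le> N"
    and comm: "\<And>k. 1 \<le> k \<Longrightarrow> k < N \<Longrightarrow> \<rho> \<cdot> P (Suc k) = P (Suc k) \<cdot> \<rho>"
  shows "\<rho> \<cdot> HS N n em ep e = HS N n em ep e \<cdot> \<rho>"
proof -
  note levels = supported_state_levels[OF state supp]
  have lower: "\<rho> \<cdot> P l = P l \<cdot> \<rho>" if "l \<in> {2..N}" for l
    using comm[of "l - 1"] that by (cases l) auto
  have "\<rho> \<cdot> P 1 + (\<Sum>l\<in>{2..N}. \<rho> \<cdot> P l) = P 1 \<cdot> \<rho> + (\<Sum>l\<in>{2..N}. P l \<cdot> \<rho>)"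
    using levels \<open>1 \<le> N\<close> by (simp add: sum.atLeast_Suc_atMost numeral_2_eq_2)
  moreover have "(\<Sum>l\<in>{2..N}. \<rho> \<cdot> P l) = (\<Sum>l\<in>{2..N}. P l \<cdot> \<rho>)"
    using lower by (rule sum.cong[OF refl])
  ultimately have "\<rho> \<cdot> P 1 = P 1 \<cdot> \<rho>"
    by simp
  then have "\<rho> \<cdot> P l = P l \<cdot> \<rho>" if "l \<in> {1..N}" for l
    using lower[of l] that by (cases "l = 1") auto
  then have "(\<Sum>k\<in>{1..N}. scal (of_real (e k)) (\<rho> \<cdot> P k)) = (\<Sum>k\<in>{1..N}. scal (of_real (e k)) (P k \<cdot> \<rho>))"
    by (intro sum.cong) auto
  then show ?thesis
    unfolding HS_eq using supported_state_kills[OF state supp] by (simp add: mmul_linear)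
qed
end

theorem theorem3p7:
  fixes N :: nat and n :: "nat \<Rightarrow> nat"
    and em ep :: real and e :: "nat \<Rightarrow> real"
    and Gp Gm gp gm :: "real \<Rightarrow> real"
    and \<rho> :: op
  assumes N2: "N \<ge> 2"
    and n_mono: "\<And>k. 1 \<le> k \<Longrightarrow> k < N \<Longrightarrow> n (Suc k) \<le> n k"
    and n_pos: "\<And>k. 1 \<le> k \<Longrightarrow> k \<le> N \<Longrightarrow> 1 \<le> n k"
    and e_dist: "inj_on e {1..N}" "\<And>k. 1 \<le> k \<Longrightarrow> k \<le> N \<Longrightarrow> e k \<noteq> em \<and> e k \<noteq> ep" "em \<noteq> ep"
    and e_order: "\<And>k. 1 \<le> k \<Longrightarrow> k < N \<Longrightarrow> em < e (Suc k) \<and> e (Suc k) < e k \<and> e k < ep"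
    and w_dist: "omega_p ep e \<noteq> omega_m N em e" "inj_on (omega e) {1..N-1}"
      "\<And>k. 1 \<le> k \<Longrightarrow> k < N \<Longrightarrow> omega e k \<noteq> omega_p ep e \<and> omega e k \<noteq> omega_m N em e"
    and G_pos: "\<And>w. w \<in> {omega_p ep e, omega_m N em e} \<union> omega e ` {1..N-1} \<Longrightarrow> 0 < Gp w \<and> 0 < Gm w"
    and state: "is_state N n \<rho>"
    and supp: "supported_Omega N n \<rho>"
  shows "(invariant N n em ep e Gp Gm gp gm \<rho> \<longleftrightarrow>
           (\<forall>k\<in>{1..N-1}. commutes N n \<rho> (absZ N n k) \<and> commutes N n \<rho> (proj n (Suc k))
              \<and> mmul N n (mmul N n (adj (Zop n k)) \<rho>) (Zop n k)
                  = scal (of_real (exp (beta e Gp Gm k))) (mmul N n \<rho> (absZ N n k))))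
       \<and> (invariant N n em ep e Gp Gm gp gm \<rho> \<longrightarrow> commutes N n \<rho> (HS N n em ep e))"
proof -
  interpret ladder N n
    using n_mono n_pos by unfold_locales
  have rates: "0 < Gm (omega e k) \<and> 0 < Gp (omega e k)" if "1 \<le> k" "k < N" for k
    using G_pos[of "omega e k"] that by auto
  have exp_beta: "exp (beta e Gp Gm k) = Gm (omega e k) / Gp (omega e k)" if "k \<in> {1..N-1}" for k
    using G_pos[of "omega e k"] that by (auto simp: beta_def)
  have iff: "invariant N n em ep e Gp Gm gp gm \<rho> \<longleftrightarrow>
      (\<forall>k\<in>{1..N-1}. commutes N n \<rho> (Q k) \<and> commutes N n \<rho> (P (Suc k))
         \<and> adj (Z k) \<cdot> \<rho> \<cdot> Z k = scal (of_real (exp (beta e Gp Gm k))) (\<rho> \<cdot> Q k))"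
    using invariant_iff_detailed_balance[where e = e and Gm = Gm and Gp = Gp, OF state supp rates] exp_beta by (simp add: commutes_def)
  moreover have "commutes N n \<rho> (HS N n em ep e)" if "invariant N n em ep e Gp Gm gp gm \<rho>"
    using that N2 unfolding iff commutes_def by (auto intro!: commute_HS[OF state supp])
  ultimately show ?thesis
    by blast
qed

end
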